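(* Let $\lambda>0$ with $\lambda^{-2}$ an integer and $\delta>0$. For all sufficiently large $N$ (depending on $\lambda$) the following holds. Let $f,g:[N]\to[-1,1]$ and suppose $|\widehat f(\frac aq+\beta)|\le\delta|\beta|N^2$ for all integers $1\le a,q\le\lambda^{-2}$ and all $\beta\in\mathbb{R}$. Then $$\Big|\sum_{n\ge1}(f*g)(n)1_S(n)\Big|\le 10(\delta\lambda^{-8}+\lambda)N^{3/2}.$$
   Context: $e(\theta):=e^{2\pi i\theta}$; for $f:[N]\to\mathbb{C}$, $\widehat f(\theta):=\sum_{n\le N}f(n)e(-n\theta)$. For finitely supported $f,g:\mathbb{Z}\to\mathbb{C}$ (functions on $[N]$ extended by $0$), $(f*g)(x):=\sum_{n\in\mathbb{Z}}f(n)g(x-n)$. $S:=\{m^2:m\in\mathbb{N}\}$. *)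

theory Defs
  imports "HOL-Analysis.Analysis"
begin

definition ee :: "real \<Rightarrow> complex" where
  "ee \<theta> = exp (2 * of_real pi * \<i> * of_real \<theta>)"

definition fhat :: "nat \<Rightarrow> (nat \<Rightarrow> real) \<Rightarrow> real \<Rightarrow> complex" where
  "fhat N f \<theta> = (\<Sum>n\<in>{1..N}. of_real (f n) * ee (- (real n * \<theta>)))"

definition zext :: "nat \<Rightarrow> (nat \<Rightarrow> real) \<Rightarrow> int \<Rightarrow> real" where
  "zext N f x = (if 1 \<le> x \<and> x \<le> int N then f (nat x) else 0)"

text \<open>convolution over Z of the zero extensions (the sum over all n in Z reduces to
  the support {1..N} of the first factor)\<close>
definition conv :: "nat \<Rightarrow> (nat \<Rightarrow> real) \<Rightarrow> (nat \<Rightarrow> real) \<Rightarrow> int \<Rightarrow> real" where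
  "conv N f g x = (\<Sum>n\<in>{1..int N}. zext N f n * zext N g (x - n))"

definition Sq :: "int set" where
  "Sq = {int (m^2) | m. m \<in> (UNIV :: nat set)}"

end

theory Submission
  imports Defs "HOL-Library.Discrete_Functions"
begin

text \<open>
  Circle method with L = 4N sample points r/L.  With M = floor(sqrt(2N)) and the Weyl sum
  W(t) = sum_{m <= M} e(m^2 t), orthogonality of additive characters turns L times the sum of
  (f*g)(m^2) over m <= M into sum_{r<L} fhat(r/L) ghat(r/L) W(r/L).  Put Q = lambda^-2.
  Within Q^2/N of a fraction a/q with q <= Q (the major arcs) the hypothesis gives
  |fhat| <= delta Q^2 N; there are O(Q^4) such sample points, so Cauchy-Schwarz and Parseval
  bound their contribution by O(delta Q^4 N^2 sqrt N).  Elsewhere Weyl differencing, Dirichlet's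
  approximation theorem and the estimate sum_{0<t<q} 1/||ta/q|| = O(q sqrt q) give
  |W|^2 <= 100 N/Q, while Parseval bounds sum_r |fhat(r/L)| |ghat(r/L)| by L N.
\<close>

section \<open>Additive characters\<close>

lemma ee_add: "ee (x + y) = ee x * ee y"
  unfolding ee_def by (simp add: distrib_left exp_add)

lemma norm_ee [simp]: "norm (ee x) = 1"
  unfolding ee_def by (simp add: norm_exp_eq_Re)

lemma ee_0 [simp]: "ee 0 = 1"
  unfolding ee_def by simp

lemma ee_of_int [simp]: "ee (of_int n) = 1"
  unfolding ee_def by (simp add: exp_eq_1)

lemma cnj_ee: "cnj (ee x) = ee (- x)"
  unfolding ee_def by (simp add: exp_cnj)

lemma ee_of_nat_mult: "ee (real n * x) = ee x ^ n"
  unfolding ee_def by (simp add: exp_of_nat_mult[symmetric] mult_ac)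

lemma ee_eq_1_iff: "ee x = 1 \<longleftrightarrow> x \<in> \<int>"
proof -
  have "ee x = 1 \<longleftrightarrow> (\<exists>n::int. 2 * pi * x = of_int (2 * n) * pi)"
    unfolding ee_def exp_eq_1 by (simp add: mult_ac)
  also have "\<dots> \<longleftrightarrow> (\<exists>n::int. x = of_int n)"
    by simp
  also have "\<dots> \<longleftrightarrow> x \<in> \<int>"
    by (auto simp: Ints_def)
  finally show ?thesis .
qed

lemma sum_ee_orthogonality:
  fixes d :: int
  assumes "\<bar>d\<bar> < int L"
  shows "(\<Sum>r<L. ee (real r * (of_int d / real L))) = (if d = 0 then of_nat L else 0)"
proof (cases "d = 0")
  case False
  define z where "z = ee (of_int d / real L)"
  have L: "L > 0" using assms by simp
  have "z ^ L = 1"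
    unfolding z_def using L by (simp flip: ee_of_nat_mult)
  moreover have "z \<noteq> 1"
  proof
    assume "z = 1"
    then obtain n :: int where "of_int d / real L = of_int n"
      unfolding z_def ee_eq_1_iff by (auto elim: Ints_cases)
    then have "d = n * int L" using L
      by (simp add: field_simps) (metis of_int_eq_iff of_int_mult of_int_of_nat_eq)
    moreover have "1 \<le> \<bar>n\<bar>" using False \<open>d = n * int L\<close> by auto
    ultimately have "int L \<le> \<bar>d\<bar>" by (simp add: abs_mult mult_le_cancel_right1)
    with assms show False by simp
  qed
  ultimately have "(\<Sum>r<L. z ^ r) = 0" by (simp add: sum_gp_strict)
  then show ?thesis using False unfolding z_def ee_of_nat_mult by simp
qed simp

section \<open>Discrete Fourier analysis on [N]\<close>

lemma fhat_add_of_int: "fhat N f (x + of_int m) = fhat N f x"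
  unfolding fhat_def
proof (intro sum.cong refl)
  fix n
  have "- (real n * (x + of_int m)) = - (real n * x) + of_int (- (int n * m))"
    by (simp add: algebra_simps)
  then show "of_real (f n) * ee (- (real n * (x + of_int m))) = of_real (f n) * ee (- (real n * x))"
    by (simp only: ee_add ee_of_int mult_1_right)
qed

lemma cnj_fhat: "cnj (fhat N f x) = (\<Sum>n\<in>{1..N}. of_real (f n) * ee (real n * x))"
  unfolding fhat_def by (simp add: cnj_ee)

lemma parseval_discrete:
  assumes "N \<le> L"
  shows "(\<Sum>r<L. (norm (fhat N f (real r / real L)))\<^sup>2) = real L * (\<Sum>n\<in>{1..N}. (f n)\<^sup>2)"
proof -
  define E where "E r n n' = ee (real r * (of_int (int n' - int n) / real L))" for r n n' :: nat
  have square: "complex_of_real ((norm (fhat N f (real r / real L)))\<^sup>2)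
      = (\<Sum>n\<in>{1..N}. \<Sum>n'\<in>{1..N}. of_real (f n * f n') * E r n n')" for r
  proof -
    have mix: "ee (- (real n * (real r / real L))) * ee (real n' * (real r / real L)) = E r n n'" for n n'
      unfolding E_def ee_add[symmetric] by (rule arg_cong[where f = ee]) (cases "L = 0"; simp add: field_simps)
    have "complex_of_real ((norm (fhat N f (real r / real L)))\<^sup>2)
        = fhat N f (real r / real L) * cnj (fhat N f (real r / real L))"
      by (rule complex_norm_square)
    also have "\<dots> = (\<Sum>n\<in>{1..N}. \<Sum>n'\<in>{1..N}.
        (of_real (f n) * ee (- (real n * (real r / real L)))) * (of_real (f n') * ee (real n' * (real r / real L))))"
      unfolding cnj_fhat by (simp add: fhat_def sum_product)
    also have "\<dots> = (\<Sum>n\<in>{1..N}. \<Sum>n'\<in>{1..N}. of_real (f n * f n') * E r n n')"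
      by (simp only: mix[symmetric] of_real_mult mult_ac)
    finally show ?thesis .
  qed
  have orth: "(\<Sum>r<L. E r n n') = (if n = n' then of_nat L else 0)"
    if "n \<in> {1..N}" "n' \<in> {1..N}" for n n'
  proof -
    have "\<bar>int n' - int n\<bar> < int L" using that assms by auto
    from sum_ee_orthogonality[OF this] show ?thesis unfolding E_def by simp
  qed
  have "complex_of_real (\<Sum>r<L. (norm (fhat N f (real r / real L)))\<^sup>2)
      = (\<Sum>r<L. \<Sum>n\<in>{1..N}. \<Sum>n'\<in>{1..N}. of_real (f n * f n') * E r n n')"
    unfolding of_real_sum square ..
  also have "\<dots> = (\<Sum>n\<in>{1..N}. \<Sum>n'\<in>{1..N}. \<Sum>r<L. of_real (f n * f n') * E r n n')"
    by (subst sum.swap, rule sum.cong[OF refl], rule sum.swap)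
  also have "\<dots> = (\<Sum>n\<in>{1..N}. \<Sum>n'\<in>{1..N}. of_real (f n * f n') * (\<Sum>r<L. E r n n'))"
    by (simp only: sum_distrib_left)
  also have "\<dots> = (\<Sum>n\<in>{1..N}. \<Sum>n'\<in>{1..N}. of_real (f n * f n') * (if n = n' then of_nat L else 0))"
    by (intro sum.cong refl) (simp add: orth)
  also have "\<dots> = (\<Sum>n\<in>{1..N}. of_real (f n * f n) * of_nat L)"
    by (simp add: if_distrib cong: if_cong)
  also have "\<dots> = complex_of_real (real L * (\<Sum>n\<in>{1..N}. (f n)\<^sup>2))"
    by (simp add: sum_distrib_left power2_eq_square mult_ac)
  finally show ?thesis by (simp only: of_real_eq_iff)
qed

lemma sum_norm_fhat_sq_le:
  assumes "N \<le> L" and bounded: "\<forall>n\<in>{1..N}. f n \<in> {-1..1}"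
  shows "(\<Sum>r<L. (norm (fhat N f (real r / real L)))\<^sup>2) \<le> real L * real N"
proof -
  have "(\<Sum>n\<in>{1..N}. (f n)\<^sup>2) \<le> (\<Sum>n\<in>{1..N}. 1)"
    using bounded by (intro sum_mono) (auto simp: abs_square_le_1 abs_le_iff)
  then show ?thesis unfolding parseval_discrete[OF assms(1)] by (intro mult_left_mono) auto
qed

lemma sum_norm_fhat_mult_le:
  assumes "N \<le> L" and bounded: "\<forall>n\<in>{1..N}. f n \<in> {-1..1} \<and> g n \<in> {-1..1}"
  shows "(\<Sum>r<L. norm (fhat N f (real r / real L)) * norm (fhat N g (real r / real L))) \<le> real L * real N"
proof -
  have am_gm: "x * y \<le> (x\<^sup>2 + y\<^sup>2) / 2" for x y :: real
    using sum_squares_bound[of x y] by simp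
  have "(\<Sum>r<L. norm (fhat N f (real r / real L)) * norm (fhat N g (real r / real L)))
      \<le> (\<Sum>r<L. ((norm (fhat N f (real r / real L)))\<^sup>2 + (norm (fhat N g (real r / real L)))\<^sup>2) / 2)"
    by (intro sum_mono am_gm)
  also have "\<dots> = ((\<Sum>r<L. (norm (fhat N f (real r / real L)))\<^sup>2)
      + (\<Sum>r<L. (norm (fhat N g (real r / real L)))\<^sup>2)) / 2"
    by (simp only: sum.distrib sum_divide_distrib[symmetric])
  also have "\<dots> \<le> real L * real N"
    using sum_norm_fhat_sq_le[OF assms(1), of f] sum_norm_fhat_sq_le[OF assms(1), of g] bounded by auto
  finally show ?thesis .
qed

lemma sum_norm_fhat_le_sqrt_card:
  assumes "N \<le> L" and "S \<subseteq> {..<L}" and bounded: "\<forall>n\<in>{1..N}. g n \<in> {-1..1}"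
  shows "(\<Sum>r\<in>S. norm (fhat N g (real r / real L))) \<le> sqrt (real (card S) * (real L * real N))"
proof (rule real_le_rsqrt)
  have "(\<Sum>r\<in>S. 1 * norm (fhat N g (real r / real L)))\<^sup>2
      \<le> (\<Sum>r\<in>S. 1\<^sup>2) * (\<Sum>r\<in>S. (norm (fhat N g (real r / real L)))\<^sup>2)"
    by (rule Cauchy_Schwarz_ineq_sum)
  also have "(\<Sum>r\<in>S. (norm (fhat N g (real r / real L)))\<^sup>2) \<le> (\<Sum>r<L. (norm (fhat N g (real r / real L)))\<^sup>2)"
    using assms(2) by (intro sum_mono2) auto
  also have "\<dots> \<le> real L * real N" by (rule sum_norm_fhat_sq_le[OF assms(1) bounded])
  finally show "(\<Sum>r\<in>S. norm (fhat N g (real r / real L)))\<^sup>2 \<le> real (card S) * (real L * real N)"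
    by (simp add: mult_left_mono)
qed

section \<open>The convolution at the squares\<close>

lemma conv_eq_0_if_gt: "2 * int N < x \<Longrightarrow> conv N f g x = 0"
  unfolding conv_def zext_def by (intro sum.neutral) auto

lemma zext_diff_eq_sum:
  "zext N g (int k - int n) = (\<Sum>n'\<in>{1..N}. if k = n + n' then g n' else 0)"
proof (cases "n < k \<and> k - n \<le> N")
  case True
  have "(\<Sum>n'\<in>{1..N}. if k = n + n' then g n' else 0) = (\<Sum>n'\<in>{1..N}. if n' = k - n then g n' else 0)"
    using True by (intro sum.cong refl) auto
  also have "\<dots> = g (k - n)" using True by (simp add: sum.delta' Suc_le_eq)
  moreover have "nat (int k - int n) = k - n" "1 \<le> int k - int n" "int k - int n \<le> int N"
    using True by auto
  ultimately show ?thesis unfolding zext_def by simp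
next
  case False
  then have "(\<Sum>n'\<in>{1..N}. if k = n + n' then g n' else 0) = 0"
    by (intro sum.neutral) auto
  then show ?thesis using False unfolding zext_def by auto
qed

lemma conv_of_nat:
  "conv N f g (int k) = (\<Sum>n\<in>{1..N}. \<Sum>n'\<in>{1..N}. if k = n + n' then f n * g n' else 0)"
proof -
  have "bij_betw int {1..N} {1..int N}"
  proof (rule bij_betwI')
    show "\<exists>x\<in>{1..N}. y = int x" if "y \<in> {1..int N}" for y
      using that by (intro bexI[of _ "nat y"]) auto
  qed auto
  then have "conv N f g (int k) = (\<Sum>n\<in>{1..N}. zext N f (int n) * zext N g (int k - int n))"
    unfolding conv_def by (rule sum.reindex_bij_betw[symmetric])
  also have "\<dots> = (\<Sum>n\<in>{1..N}. f n * (\<Sum>n'\<in>{1..N}. if k = n + n' then g n' else 0))"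
    unfolding zext_diff_eq_sum by (intro sum.cong refl) (simp add: zext_def)
  finally show ?thesis by (simp add: sum_distrib_left if_distrib cong: if_cong)
qed

lemma bij_betw_squares:
  assumes "M\<^sup>2 \<le> 2 * N" and "2 * N < (Suc M)\<^sup>2"
  shows "bij_betw (\<lambda>m. int (m\<^sup>2)) {1..M} ({1..2 * int N} \<inter> Sq)"
proof (rule bij_betwI')
  show "int (x\<^sup>2) = int (y\<^sup>2) \<longleftrightarrow> x = y" for x y :: nat
    by (simp add: power2_eq_iff_nonneg)
  show "int (m\<^sup>2) \<in> {1..2 * int N} \<inter> Sq" if "m \<in> {1..M}" for m
  proof -
    have "m\<^sup>2 \<le> M\<^sup>2" using that by (simp add: power_mono)
    then have "m\<^sup>2 \<le> 2 * N" using assms(1) by linarith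
    moreover have "1 \<le> m\<^sup>2" using that by simp
    ultimately have "int (m\<^sup>2) \<in> {1..2 * int N}"
      by (simp only: atLeastAtMost_iff) (metis of_nat_1 of_nat_le_iff of_nat_mult of_nat_numeral)
    then show ?thesis unfolding Sq_def by auto
  qed
  show "\<exists>m\<in>{1..M}. y = int (m\<^sup>2)" if "y \<in> {1..2 * int N} \<inter> Sq" for y
  proof -
    from that obtain m where m: "y = int (m\<^sup>2)" unfolding Sq_def by auto
    have "int 1 \<le> int (m\<^sup>2)" "int (m\<^sup>2) \<le> int (2 * N)" using that m by auto
    then have m2: "m\<^sup>2 \<le> 2 * N" "1 \<le> m\<^sup>2" by (simp_all only: of_nat_le_iff)
    from m2(2) have "m \<noteq> 0" by (cases m) auto
    moreover have "m\<^sup>2 < (Suc M)\<^sup>2" using m2(1) assms(2) by linarith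
    then have "m < Suc M" by (rule power_less_imp_less_base) simp
    ultimately show ?thesis using m by auto
  qed
qed

lemma infsum_conv_squares:
  assumes "M\<^sup>2 \<le> 2 * N" and "2 * N < (Suc M)\<^sup>2"
  shows "infsum (\<lambda>x. conv N f g x * indicator Sq x) {(1::int)..} = (\<Sum>m\<in>{1..M}. conv N f g (int (m\<^sup>2)))"
proof -
  have "infsum (\<lambda>x. conv N f g x * indicator Sq x) {(1::int)..}
      = infsum (\<lambda>x. conv N f g x * indicator Sq x) {1..2 * int N}"
    by (rule infsum_cong_neutral) (auto simp: conv_eq_0_if_gt)
  also have "\<dots> = (\<Sum>x\<in>{1..2 * int N} \<inter> Sq. conv N f g x)"
    by (simp add: indicator_def sum.inter_restrict)
  also have "\<dots> = (\<Sum>m\<in>{1..M}. conv N f g (int (m\<^sup>2)))"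
    by (rule sum.reindex_bij_betw[OF bij_betw_squares[OF assms], symmetric])
  finally show ?thesis .
qed

definition weyl_sum :: "nat \<Rightarrow> real \<Rightarrow> complex" where
  "weyl_sum M \<theta> = (\<Sum>m\<in>{1..M}. ee (real (m\<^sup>2) * \<theta>))"

lemma norm_weyl_sum_le: "norm (weyl_sum M \<theta>) \<le> real M"
  unfolding weyl_sum_def using norm_sum[of "\<lambda>m. ee (real (m\<^sup>2) * \<theta>)" "{1..M}"] by simp

lemma sum_ee_orthogonality_squares:
  assumes "2 * N < L" and "M\<^sup>2 \<le> 2 * N" and "n \<in> {1..N}" "n' \<in> {1..N}" "m \<in> {1..M}"
  shows "(\<Sum>r<L. ee (real r * (of_int (int (m\<^sup>2) - int n - int n') / real L)))
    = (if m\<^sup>2 = n + n' then of_nat L else 0)"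
proof -
  have "m\<^sup>2 \<le> M\<^sup>2" using assms(5) by (simp add: power_mono)
  then have "m\<^sup>2 \<le> 2 * N" using assms(2) by linarith
  then have "(int m)\<^sup>2 \<le> 2 * int N"
    by (metis of_nat_le_iff of_nat_mult of_nat_numeral of_nat_power)
  moreover have "int n \<le> int N" "int n' \<le> int N" "1 \<le> int n" "1 \<le> int n'" "2 * int N < int L"
    using assms by auto
  moreover have "0 \<le> (int m)\<^sup>2" by simp
  ultimately have "\<bar>int (m\<^sup>2) - int n - int n'\<bar> < int L"
    unfolding of_nat_power abs_less_iff by linarith
  then have "(\<Sum>r<L. ee (real r * (of_int (int (m\<^sup>2) - int n - int n') / real L)))
      = (if int (m\<^sup>2) - int n - int n' = 0 then of_nat L else 0)"
    by (rule sum_ee_orthogonality)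
  moreover have "int (m\<^sup>2) - int n - int n' = 0 \<longleftrightarrow> m\<^sup>2 = n + n'"
    by (simp only: diff_diff_eq eq_iff_diff_eq_0[symmetric] of_nat_add[symmetric] of_nat_eq_iff)
  ultimately show ?thesis by (simp only:)
qed

lemma circle_method_identity:
  assumes "2 * N < L" and "M\<^sup>2 \<le> 2 * N"
  shows "(\<Sum>r<L. fhat N f (real r / real L) * fhat N g (real r / real L) * weyl_sum M (real r / real L))
     = of_nat L * of_real (\<Sum>m\<in>{1..M}. conv N f g (int (m\<^sup>2)))"
proof -
  define E where "E r m n n' = ee (real r * (of_int (int (m\<^sup>2) - int n - int n') / real L))"
    for r m n n' :: nat
  have expand: "fhat N f (real r / real L) * fhat N g (real r / real L) * weyl_sum M (real r / real L)
      = (\<Sum>n\<in>{1..N}. \<Sum>n'\<in>{1..N}. \<Sum>m\<in>{1..M}. of_real (f n * g n') * E r m n n')" for r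
  proof -
    have mix: "ee (- (real n * (real r / real L))) * ee (- (real n' * (real r / real L)))
        * ee (real (m\<^sup>2) * (real r / real L))
        = ee (real r * (of_int (int (m\<^sup>2) - int n - int n') / real L))" for m n n'
      unfolding ee_add[symmetric] by (rule arg_cong[where f = ee]) (cases "L = 0"; simp add: field_simps)
    have "fhat N f (real r / real L) * fhat N g (real r / real L) * weyl_sum M (real r / real L)
        = (\<Sum>n\<in>{1..N}. \<Sum>n'\<in>{1..N}. (of_real (f n) * ee (- (real n * (real r / real L)))) *
            (of_real (g n') * ee (- (real n' * (real r / real L)))) * weyl_sum M (real r / real L))"
      unfolding fhat_def sum_product by (simp only: sum_distrib_right)
    also have "\<dots> = (\<Sum>n\<in>{1..N}. \<Sum>n'\<in>{1..N}. \<Sum>m\<in>{1..M}. of_real (f n * g n') * E r m n n')"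
      unfolding weyl_sum_def sum_distrib_left E_def mix[symmetric]
      by (intro sum.cong refl) (simp add: mult_ac)
    finally show ?thesis .
  qed
  have orth: "(\<Sum>r<L. E r m n n') = (if m\<^sup>2 = n + n' then of_nat L else 0)"
    if "n \<in> {1..N}" "n' \<in> {1..N}" "m \<in> {1..M}" for n n' m
    unfolding E_def using sum_ee_orthogonality_squares[OF assms that] .
  have "(\<Sum>r<L. fhat N f (real r / real L) * fhat N g (real r / real L) * weyl_sum M (real r / real L))
      = (\<Sum>r<L. \<Sum>n\<in>{1..N}. \<Sum>n'\<in>{1..N}. \<Sum>m\<in>{1..M}. of_real (f n * g n') * E r m n n')"
    unfolding expand ..
  also have "\<dots> = (\<Sum>n\<in>{1..N}. \<Sum>n'\<in>{1..N}. \<Sum>m\<in>{1..M}. of_real (f n * g n') * (\<Sum>r<L. E r m n n'))"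
    by (simp add: sum.swap[of _ "{..<L}"] sum_distrib_left)
  also have "\<dots> = (\<Sum>n\<in>{1..N}. \<Sum>n'\<in>{1..N}. \<Sum>m\<in>{1..M}.
      of_nat L * of_real (if m\<^sup>2 = n + n' then f n * g n' else 0))"
    by (intro sum.cong refl) (simp add: orth)
  also have "\<dots> = (\<Sum>m\<in>{1..M}. \<Sum>n\<in>{1..N}. \<Sum>n'\<in>{1..N}.
      of_nat L * of_real (if m\<^sup>2 = n + n' then f n * g n' else 0))"
    by (subst sum.swap, rule sum.swap)
  also have "\<dots> = of_nat L * of_real (\<Sum>m\<in>{1..M}. conv N f g (int (m\<^sup>2)))"
    unfolding conv_of_nat by (simp add: sum_distrib_left of_real_sum)
  finally show ?thesis .
qed

section \<open>Distance to the nearest integer and geometric sums\<close>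

definition circle_norm :: "real \<Rightarrow> real" where
  "circle_norm x = \<bar>x - of_int (round x)\<bar>"

lemma circle_norm_le: "circle_norm x \<le> \<bar>x - of_int n\<bar>"
  unfolding circle_norm_def by (rule round_diff_minimal)

lemma circle_norm_greatest: "(\<And>n::int. c \<le> \<bar>x - of_int n\<bar>) \<Longrightarrow> c \<le> circle_norm x"
  unfolding circle_norm_def by blast

lemma circle_norm_nonneg: "0 \<le> circle_norm x"
  unfolding circle_norm_def by simp

lemma circle_norm_le_half: "circle_norm x \<le> 1/2"
  unfolding circle_norm_def using of_int_round_abs_le[of x] by linarith

lemma circle_norm_add_of_int [simp]: "circle_norm (x + of_int m) = circle_norm x"
proof (rule antisym)
  show "circle_norm (x + of_int m) \<le> circle_norm x"
    using circle_norm_le[of "x + of_int m" "round x + m"] unfolding circle_norm_def by simp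
  show "circle_norm x \<le> circle_norm (x + of_int m)"
    using circle_norm_le[of x "round (x + of_int m) - m"] unfolding circle_norm_def by simp
qed

lemma circle_norm_add_ge: "circle_norm x - \<bar>y\<bar> \<le> circle_norm (x + y)"
  using circle_norm_le[of x "round (x + y)"] unfolding circle_norm_def by linarith

lemma circle_norm_eq_abs:
  assumes "\<bar>x\<bar> \<le> 1/2"
  shows "circle_norm x = \<bar>x\<bar>"
proof (rule antisym)
  show "circle_norm x \<le> \<bar>x\<bar>" using circle_norm_le[of x 0] by simp
  show "\<bar>x\<bar> \<le> circle_norm x"
  proof (rule circle_norm_greatest)
    fix n :: int
    show "\<bar>x\<bar> \<le> \<bar>x - of_int n\<bar>"
    proof (cases "n = 0")
      case False
      then have "1 \<le> \<bar>real_of_int n\<bar>" by linarith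
      then show ?thesis using assms by linarith
    qed simp
  qed
qed

lemma circle_norm_ge_min:
  assumes "0 \<le> x" "x \<le> 1"
  shows "min x (1 - x) \<le> circle_norm x"
proof (rule circle_norm_greatest)
  fix n :: int
  have "min x (1 - x) \<le> x" "min x (1 - x) \<le> 1 - x" by simp_all
  moreover have "of_int n \<le> (0::real) \<or> 1 \<le> real_of_int n" by (cases "n \<le> 0") auto
  ultimately show "min x (1 - x) \<le> \<bar>x - of_int n\<bar>"
    using abs_ge_self[of "x - of_int n"] abs_ge_minus_self[of "x - of_int n"] by linarith
qed

lemma cos_ge_1_minus_sq_half:
  fixes x :: real
  assumes "0 \<le> x"
  shows "1 - x\<^sup>2 / 2 \<le> cos x"
proof -
  let ?f = "\<lambda>u::real. u\<^sup>2 / 2 - 1 + cos u"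
  have "?f 0 \<le> ?f x"
  proof (rule DERIV_nonneg_imp_nondecreasing[OF assms])
    show "\<exists>y. DERIV ?f u :> y \<and> y \<ge> 0" if "0 \<le> u" for u
      using that by (intro exI[of _ "u - sin u"]) (auto intro!: derivative_eq_intros simp: sin_x_le_x)
  qed
  then show ?thesis by simp
qed

lemma sin_ge_x_minus_cube:
  fixes x :: real
  assumes "0 \<le> x"
  shows "x - x ^ 3 / 6 \<le> sin x"
proof -
  let ?f = "\<lambda>u::real. sin u - u + u ^ 3 / 6"
  have "?f 0 \<le> ?f x"
  proof (rule DERIV_nonneg_imp_nondecreasing[OF assms])
    show "\<exists>y. DERIV ?f u :> y \<and> y \<ge> 0" if "0 \<le> u" for u
      using cos_ge_1_minus_sq_half[OF that]
      by (intro exI[of _ "cos u - 1 + u\<^sup>2 / 2"]) (auto intro!: derivative_eq_intros simp: field_simps)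
  qed
  then show ?thesis by simp
qed

lemma sin_ge_div_pi:
  fixes x :: real
  assumes "0 \<le> x" "x \<le> pi / 2"
  shows "x / pi \<le> sin x"
proof -
  have "x \<le> 2" using assms pi_less_4 by linarith
  then have "x\<^sup>2 \<le> 4" using power_mono[of x 2 2] assms(1) by simp
  then have "x ^ 3 \<le> 4 * x" using mult_left_mono[of "x\<^sup>2" 4 x] assms(1)
    by (simp add: power3_eq_cube power2_eq_square mult_ac)
  moreover have "x / pi \<le> x / 3" using pi_gt3 assms(1) by (intro divide_left_mono) auto
  ultimately show ?thesis using sin_ge_x_minus_cube[OF assms(1)] by linarith
qed

lemma circle_norm_le_norm_ee_sub_1: "2 * circle_norm \<alpha> \<le> norm (ee \<alpha> - 1)"
proof -
  define t where "t = \<alpha> - of_int (round \<alpha>)"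
  have t: "circle_norm \<alpha> = \<bar>t\<bar>" "\<bar>t\<bar> \<le> 1/2"
    using circle_norm_le_half[of \<alpha>] unfolding t_def circle_norm_def by auto
  have "ee \<alpha> = ee t * ee (of_int (round \<alpha>))" unfolding t_def ee_add[symmetric] by simp
  also have "\<dots> = exp (\<i> * of_real (2 * pi * t))"
    unfolding ee_of_int mult_1_right unfolding ee_def by (simp add: mult_ac)
  finally have "ee \<alpha> = exp (\<i> * of_real (2 * pi * t))" .
  then have "norm (ee \<alpha> - 1) = 2 * \<bar>sin (2 * pi * t / 2)\<bar>" by (simp only: dist_exp_i_1)
  then have ee_eq: "norm (ee \<alpha> - 1) = 2 * \<bar>sin (pi * t)\<bar>" by simp
  have "pi * \<bar>t\<bar> \<le> pi * (1/2)" using t(2) by (intro mult_left_mono) auto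
  then have "\<bar>t\<bar> \<le> sin (pi * \<bar>t\<bar>)" using sin_ge_div_pi[of "pi * \<bar>t\<bar>"] by simp
  also have "\<dots> \<le> \<bar>sin (pi * t)\<bar>" by (cases "t \<ge> 0") simp_all
  finally show ?thesis using ee_eq t(1) by simp
qed

lemma norm_sum_ee_le: "norm (\<Sum>a\<in>{1..K}. ee (real a * \<alpha>)) \<le> real K"
  using norm_sum[of "\<lambda>a. ee (real a * \<alpha>)" "{1..K}"] by simp

lemma norm_sum_ee_le_inverse_circle_norm:
  assumes "circle_norm \<alpha> > 0"
  shows "norm (\<Sum>a\<in>{1..K}. ee (real a * \<alpha>)) \<le> 1 / circle_norm \<alpha>"
proof (cases "K = 0")
  case False
  define z where "z = ee \<alpha>"
  have sum_z: "(\<Sum>a\<in>{1..K}. ee (real a * \<alpha>)) = (\<Sum>a\<in>{1..K}. z ^ a)"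
    unfolding z_def ee_of_nat_mult ..
  have "(1 - z) * (\<Sum>a\<in>{1..K}. z ^ a) = z ^ 1 - z ^ Suc K"
    using False by (intro sum_gp_multiplied) auto
  then have "norm (1 - z) * norm (\<Sum>a\<in>{1..K}. z ^ a) \<le> norm (z ^ 1) + norm (z ^ Suc K)"
    by (metis norm_mult norm_triangle_ineq4)
  also have "\<dots> = 2" unfolding z_def by (simp only: norm_power norm_ee) simp
  finally have "norm (1 - z) * norm (\<Sum>a\<in>{1..K}. z ^ a) \<le> 2" .
  moreover have "2 * circle_norm \<alpha> \<le> norm (1 - z)"
    unfolding z_def using circle_norm_le_norm_ee_sub_1[of \<alpha>] by (simp add: norm_minus_commute)
  ultimately have "2 * circle_norm \<alpha> * norm (\<Sum>a\<in>{1..K}. z ^ a) \<le> 2"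
    by (meson mult_right_mono norm_ge_zero order_trans)
  then show ?thesis using assms sum_z by (simp add: field_simps)
qed (use assms in simp)

section \<open>Weyl differencing\<close>

lemma sum_upper_triangle_by_difference:
  fixes F :: "nat \<Rightarrow> nat \<Rightarrow> 'a::comm_monoid_add"
  shows "(\<Sum>a\<in>{1..M}. \<Sum>b\<in>{1..M}. if a < b then F a b else 0)
    = (\<Sum>h\<in>{1..M}. \<Sum>a\<in>{1..M-h}. F a (a + h))"
proof -
  have restrict: "(\<Sum>h\<in>{1..M}. if a + h \<le> M then G h else 0) = (\<Sum>h\<in>{1..M-a}. G h)"
    for a and G :: "nat \<Rightarrow> 'a"
  proof -
    have "{h\<in>{1..M}. a + h \<le> M} = {1..M-a}" by auto
    then show ?thesis by (simp flip: sum.inter_filter)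
  qed
  have shift: "(\<Sum>b\<in>{1..M}. if a < b then F a b else 0)
      = (\<Sum>h\<in>{1..M}. if a + h \<le> M then F a (a + h) else 0)"
    if "a \<le> M" for a
  proof -
    have "(\<Sum>b\<in>{1..M}. if a < b then F a b else 0) = sum (F a) {b\<in>{1..M}. a < b}"
      by (simp flip: sum.inter_filter)
    also have "{b\<in>{1..M}. a < b} = {1+a..(M-a)+a}" using that by auto
    also have "sum (F a) \<dots> = (\<Sum>h\<in>{1..M-a}. F a (h + a))"
      by (rule sum.shift_bounds_cl_nat_ivl)
    finally show ?thesis using restrict[of a "\<lambda>h. F a (a + h)"] by (simp add: add.commute)
  qed
  have "(\<Sum>a\<in>{1..M}. \<Sum>b\<in>{1..M}. if a < b then F a b else 0)
      = (\<Sum>a\<in>{1..M}. \<Sum>h\<in>{1..M}. if a + h \<le> M then F a (a + h) else 0)"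
    by (rule sum.cong[OF refl], rule shift) simp
  also have "\<dots> = (\<Sum>h\<in>{1..M}. \<Sum>a\<in>{1..M}. if h + a \<le> M then F a (a + h) else 0)"
    by (subst sum.swap) (simp add: add.commute)
  also have "\<dots> = (\<Sum>h\<in>{1..M}. \<Sum>a\<in>{1..M-h}. F a (a + h))"
    by (simp only: restrict)
  finally show ?thesis .
qed

lemma weyl_differencing:
  "(norm (weyl_sum M \<theta>))\<^sup>2
     \<le> real M + 2 * (\<Sum>h\<in>{1..M}. norm (\<Sum>a\<in>{1..M-h}. ee (real a * (2 * real h * \<theta>))))"
proof -
  define G where "G a b = ee ((real (b\<^sup>2) - real (a\<^sup>2)) * \<theta>)" for a b :: nat
  define S where "S h = (\<Sum>a\<in>{1..M-h}. ee (real a * (2 * real h * \<theta>)))" for h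
  define U where "U = (\<Sum>a\<in>{1..M}. \<Sum>b\<in>{1..M}. if a < b then G a b else 0)"
  have split: "G a b = (if a < b then G a b else 0) + (if b < a then G a b else 0) + (if a = b then 1 else 0)"
    for a b by (auto simp: G_def)
  have lower: "(\<Sum>a\<in>{1..M}. \<Sum>b\<in>{1..M}. if b < a then G a b else 0) = cnj U"
  proof -
    have "(\<Sum>a\<in>{1..M}. \<Sum>b\<in>{1..M}. if b < a then G a b else 0)
        = (\<Sum>b\<in>{1..M}. \<Sum>a\<in>{1..M}. if b < a then G a b else 0)"
      by (rule sum.swap)
    also have "\<dots> = cnj U"
      unfolding U_def cnj_sum by (intro sum.cong refl) (simp add: G_def cnj_ee algebra_simps)
    finally show ?thesis .
  qed
  have "complex_of_real ((norm (weyl_sum M \<theta>))\<^sup>2) = cnj (weyl_sum M \<theta>) * weyl_sum M \<theta>"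
    by (subst complex_norm_square) (simp add: mult.commute)
  also have "\<dots> = (\<Sum>a\<in>{1..M}. \<Sum>b\<in>{1..M}. G a b)"
    unfolding weyl_sum_def G_def cnj_sum sum_product cnj_ee ee_add[symmetric]
    by (simp add: algebra_simps)
  also have "\<dots> = U + cnj U + of_nat M"
    by (subst split) (simp only: sum.distrib lower U_def, simp)
  also have "\<dots> = complex_of_real (real M + 2 * Re U)"
    by (simp add: complex_add_cnj)
  finally have W_sq: "(norm (weyl_sum M \<theta>))\<^sup>2 = real M + 2 * Re U"
    by (simp only: of_real_eq_iff)
  have "U = (\<Sum>h\<in>{1..M}. \<Sum>a\<in>{1..M-h}. G a (a + h))"
    unfolding U_def by (rule sum_upper_triangle_by_difference)
  also have "\<dots> = (\<Sum>h\<in>{1..M}. ee (real (h\<^sup>2) * \<theta>) * S h)"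
    unfolding S_def sum_distrib_left G_def ee_add[symmetric]
    by (intro sum.cong refl arg_cong[where f = ee]) (simp add: algebra_simps power2_eq_square)
  finally have "Re U \<le> (\<Sum>h\<in>{1..M}. norm (ee (real (h\<^sup>2) * \<theta>) * S h))"
    using complex_Re_le_cmod norm_sum order_trans by metis
  then show ?thesis unfolding W_sq S_def by (simp add: norm_mult)
qed

section \<open>Sums of reciprocal distances\<close>

lemma sum_inverse_sqrt_le: "(\<Sum>j\<in>{1..n}. 1 / sqrt (real j)) \<le> 2 * sqrt (real n)"
proof (induction n)
  case (Suc n)
  define s where "s = sqrt (real n)"
  define u where "u = sqrt (real (Suc n))"
  have u: "u > 0" "u\<^sup>2 = real n + 1" and s: "s\<^sup>2 = real n"
    unfolding s_def u_def by simp_all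
  have "2 * s * u \<le> s\<^sup>2 + u\<^sup>2" using sum_squares_bound[of s u] by (simp add: mult_ac)
  then have "2 * s * u + 1 \<le> 2 * u * u" using u s by (simp add: power2_eq_square)
  moreover have "(2 * s + 1 / u) * u = 2 * s * u + 1" using u by (simp add: field_simps)
  ultimately have "(2 * s + 1 / u) * u \<le> 2 * u * u" by simp
  then have "2 * s + 1 / u \<le> 2 * u" using u(1) by (meson mult_le_cancel_right_pos)
  moreover have "(\<Sum>j\<in>{1..Suc n}. 1 / sqrt (real j)) \<le> 2 * s + 1 / u"
    using Suc.IH unfolding s_def u_def by simp
  ultimately show ?case unfolding u_def by linarith
qed simp

lemma sum_inverse_le_sqrt: "(\<Sum>j\<in>{1..n}. 1 / real j) \<le> 2 * sqrt (real n)"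
proof -
  have "1 / real j \<le> 1 / sqrt (real j)" if "j \<in> {1..n}" for j
  proof -
    have "1 \<le> sqrt (real j)" using that by simp
    then have "sqrt (real j) * 1 \<le> sqrt (real j) * sqrt (real j)" by (intro mult_left_mono) auto
    then show ?thesis using \<open>1 \<le> sqrt (real j)\<close> by (simp add: frac_le)
  qed
  then have "(\<Sum>j\<in>{1..n}. 1 / real j) \<le> (\<Sum>j\<in>{1..n}. 1 / sqrt (real j))"
    by (rule sum_mono)
  also have "\<dots> \<le> 2 * sqrt (real n)" by (rule sum_inverse_sqrt_le)
  finally show ?thesis .
qed

lemma sum_atLeast0_lessThan_mult_periodic:
  fixes \<phi> :: "nat \<Rightarrow> 'a::comm_semiring_1"
  assumes periodic: "\<And>k. \<phi> (k + q) = \<phi> k"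
  shows "(\<Sum>k\<in>{0..<q * n}. \<phi> k) = of_nat n * (\<Sum>k\<in>{0..<q}. \<phi> k)"
proof (induction n)
  case (Suc n)
  have shift: "\<phi> (t + q * n) = \<phi> t" for t
  proof (induction n)
    case (Suc n)
    have "\<phi> (t + q * Suc n) = \<phi> ((t + q * n) + q)" by (simp add: algebra_simps)
    then show ?case using Suc periodic by simp
  qed simp
  have "(\<Sum>k\<in>{0..<q * Suc n}. \<phi> k)
      = (\<Sum>k\<in>{0..<q * n}. \<phi> k) + (\<Sum>k\<in>{0 + q * n..<q + q * n}. \<phi> k)"
    by (simp add: sum.atLeastLessThan_concat add.commute)
  also have "(\<Sum>k\<in>{0 + q * n..<q + q * n}. \<phi> k) = (\<Sum>k\<in>{0..<q}. \<phi> k)"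
    by (simp only: sum.shift_bounds_nat_ivl shift)
  finally show ?case using Suc.IH by (simp add: algebra_simps)
qed simp

lemma circle_norm_of_int_div_mod:
  assumes "q > 0"
  shows "circle_norm (of_int b / real q) = circle_norm (of_int (b mod int q) / real q)"
proof -
  have "real_of_int b = of_int (int q * (b div int q) + b mod int q)" by simp
  also have "\<dots> = real q * of_int (b div int q) + of_int (b mod int q)"
    by (simp only: of_int_add of_int_mult of_int_of_nat_eq)
  finally have "real_of_int b = real q * of_int (b div int q) + of_int (b mod int q)" .
  then have "of_int b / real q = of_int (b mod int q) / real q + of_int (b div int q)"
    using assms by (simp add: field_simps)
  then show ?thesis by simp
qed

lemma circle_norm_of_int_div_ge:
  assumes "q > 0" and "\<not> int q dvd b"
  shows "1 / real q \<le> circle_norm (of_int b / real q)"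
proof -
  define s where "s = b mod int q"
  have "0 \<le> s" "s < int q" "s \<noteq> 0"
    using assms unfolding s_def by (simp_all add: dvd_eq_mod_eq_0)
  then have "1 \<le> s" "s + 1 \<le> int q" by simp_all
  then have "1 \<le> real_of_int s" "real_of_int s + 1 \<le> real q"
    using of_int_le_iff[of "s + 1" "int q", where 'a = real] by simp_all
  then have "1 / real q \<le> of_int s / real q" "1 / real q \<le> 1 - of_int s / real q"
    using assms(1) by (simp_all add: divide_right_mono field_simps)
  then have "1 / real q \<le> min (of_int s / real q) (1 - of_int s / real q)"
    by simp
  also have "\<dots> \<le> circle_norm (of_int s / real q)"
    using \<open>0 \<le> s\<close> \<open>s < int q\<close> by (intro circle_norm_ge_min) auto
  finally have "1 / real q \<le> circle_norm (of_int (b mod int q) / real q)" unfolding s_def .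
  then show ?thesis using circle_norm_of_int_div_mod[OF assms(1), of b] by (simp only:)
qed

lemma inverse_circle_norm_frac_le:
  assumes "s \<in> {1..q-1}"
  shows "1 / circle_norm (real s / real q) \<le> real q / real s + real q / real (q - s)"
proof -
  define x where "x = real s / real q"
  have "s < q" using assms by auto
  then have x: "0 < x" "x < 1" using assms unfolding x_def by auto
  have "min x (1 - x) \<le> circle_norm x" using x by (intro circle_norm_ge_min) auto
  moreover have "0 < min x (1 - x)" using x by simp
  ultimately have "1 / circle_norm x \<le> 1 / min x (1 - x)" by (simp add: frac_le)
  also have "\<dots> \<le> 1 / x + 1 / (1 - x)" using x by (auto simp: min_def)
  also have "\<dots> = real q / real s + real q / real (q - s)"
    using assms \<open>s < q\<close> unfolding x_def by (simp add: of_nat_diff field_simps)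
  finally show ?thesis unfolding x_def .
qed

lemma mult_mod_mem_range:
  fixes a :: int
  assumes coprime: "coprime a (int q)" and t: "t \<in> {1..q-1}"
  shows "nat ((int t * a) mod int q) \<in> {1..q-1}"
proof -
  have "\<not> int q dvd int t * a"
  proof
    assume "int q dvd int t * a"
    then have "q dvd t" using coprime by (simp add: coprime_commute coprime_dvd_mult_left_iff)
    with t show False by (auto dest: dvd_imp_le)
  qed
  then have "(int t * a) mod int q \<noteq> 0" by (simp add: dvd_eq_mod_eq_0)
  moreover have "q > 0" using t by auto
  then have "0 \<le> (int t * a) mod int q" "(int t * a) mod int q < int q" by simp_all
  ultimately show ?thesis by auto
qed

lemma inj_on_mult_mod:
  fixes a :: int
  assumes coprime: "coprime a (int q)"
  shows "inj_on (\<lambda>t. nat ((int t * a) mod int q)) {1..q-1}"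
proof (rule inj_onI)
  fix t1 t2 assume t: "t1 \<in> {1..q-1}" "t2 \<in> {1..q-1}"
    and "nat ((int t1 * a) mod int q) = nat ((int t2 * a) mod int q)"
  moreover have "q > 0" using t by auto
  ultimately have "(int t1 * a) mod int q = (int t2 * a) mod int q" by (simp add: eq_nat_nat_iff)
  then have "int q dvd (int t1 - int t2) * a" by (simp add: mod_eq_dvd_iff algebra_simps)
  then have dvd: "int q dvd int t1 - int t2"
    using coprime by (simp add: coprime_commute coprime_dvd_mult_left_iff)
  have "\<bar>int t1 - int t2\<bar> < int q" using t by auto
  show "t1 = t2"
  proof (rule ccontr)
    assume "t1 \<noteq> t2"
    then have "int q \<le> \<bar>int t1 - int t2\<bar>" using dvd_imp_le_int[OF _ dvd] by simp
    with \<open>\<bar>int t1 - int t2\<bar> < int q\<close> show False by simp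
  qed
qed

lemma circle_norm_mult_div_eq_mod:
  fixes a :: int
  assumes "q > 0"
  shows "circle_norm (real t * of_int a / real q) = circle_norm (real (nat ((int t * a) mod int q)) / real q)"
proof -
  have "real (nat ((int t * a) mod int q)) = of_int ((int t * a) mod int q)" using assms by simp
  moreover have "real t * of_int a / real q = of_int (int t * a) / real q" by simp
  ultimately show ?thesis using circle_norm_of_int_div_mod[OF assms, of "int t * a"] by (simp only:)
qed

lemma sum_inverse_circle_norm_le:
  fixes a :: int
  assumes q: "q > 0" and coprime: "coprime a (int q)"
  shows "(\<Sum>t<q. 1 / circle_norm (real t * of_int a / real q)) \<le> 4 * real q * sqrt (real q)"
proof -
  define \<sigma> where "\<sigma> t = nat ((int t * a) mod int q)" for t
  have \<sigma>_norm: "circle_norm (real t * of_int a / real q) = circle_norm (real (\<sigma> t) / real q)" for t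
    unfolding \<sigma>_def by (rule circle_norm_mult_div_eq_mod[OF q])
  have \<sigma>_inj: "inj_on \<sigma> {1..q-1}" unfolding \<sigma>_def by (rule inj_on_mult_mod[OF coprime])
  have \<sigma>_range: "\<sigma> ` {1..q-1} \<subseteq> {1..q-1}"
    unfolding \<sigma>_def using mult_mod_mem_range[OF coprime] by blast
  have "(\<Sum>t<q. 1 / circle_norm (real t * of_int a / real q))
      = (\<Sum>t\<in>{1..q-1}. 1 / circle_norm (real (\<sigma> t) / real q))"
  proof -
    have "{..<q} = insert 0 {1..q-1}" using q by auto
    \<comment> \<open>the term \<open>t = 0\<close> is \<open>1 / 0\<close>, which is \<open>0\<close> in Isabelle\<close>
    moreover have "1 / circle_norm (real 0 * of_int a / real q) = 0" by (simp add: circle_norm_def)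
    ultimately show ?thesis by (simp flip: \<sigma>_norm)
  qed
  also have "\<dots> = (\<Sum>s\<in>\<sigma> ` {1..q-1}. 1 / circle_norm (real s / real q))"
    by (simp only: sum.reindex[OF \<sigma>_inj] comp_def)
  also have "\<dots> \<le> (\<Sum>s\<in>{1..q-1}. 1 / circle_norm (real s / real q))"
    by (rule sum_mono2[OF _ \<sigma>_range]) (simp_all add: circle_norm_nonneg)
  also have "\<dots> \<le> (\<Sum>s\<in>{1..q-1}. real q / real s + real q / real (q - s))"
    by (intro sum_mono inverse_circle_norm_frac_le)
  also have "\<dots> = 2 * real q * (\<Sum>s\<in>{1..q-1}. 1 / real s)"
  proof -
    have "(\<Sum>s\<in>{1..q-1}. 1 / real s) = (\<Sum>s\<in>{1..q-1}. 1 / real (q - 1 + 1 - s))"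
      by (rule sum.atLeastAtMost_rev)
    then have "(\<Sum>s\<in>{1..q-1}. 1 / real (q - s)) = (\<Sum>s\<in>{1..q-1}. 1 / real s)"
      using q by simp
    moreover have "(\<Sum>s\<in>{1..q-1}. real q / real s + real q / real (q - s))
        = real q * (\<Sum>s\<in>{1..q-1}. 1 / real s) + real q * (\<Sum>s\<in>{1..q-1}. 1 / real (q - s))"
      by (simp add: sum.distrib sum_distrib_left)
    ultimately show ?thesis by simp
  qed
  also have "\<dots> \<le> 2 * real q * (2 * sqrt (real q))"
  proof -
    have "sqrt (real (q - 1)) \<le> sqrt (real q)" by simp
    then have "(\<Sum>s\<in>{1..q-1}. 1 / real s) \<le> 2 * sqrt (real q)"
      using sum_inverse_le_sqrt[of "q - 1"] by linarith
    then show ?thesis by (intro mult_left_mono) auto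
  qed
  finally show ?thesis by simp
qed

lemma sum_inverse_circle_norm_even_le:
  fixes a :: int
  assumes q: "q > 0" and coprime: "coprime a (int q)" and qM: "q \<le> 4 * M"
  shows "(\<Sum>h\<in>{1..M}. 1 / circle_norm (real (2 * h) * of_int a / real q)) \<le> 48 * real M * sqrt (real M)"
proof -
  define \<phi> where "\<phi> k = 1 / circle_norm (real k * of_int a / real q)" for k
  define J where "J = 2 * M div q"
  have \<phi>_periodic: "\<phi> (k + q) = \<phi> k" for k
  proof -
    have "real (k + q) * of_int a / real q = real k * of_int a / real q + of_int a"
      using q by (simp add: field_simps)
    then show ?thesis unfolding \<phi>_def by simp
  qed
  have "2 * M = q * J + 2 * M mod q" unfolding J_def by simp
  moreover have "2 * M mod q < q" using q by simp
  ultimately have "2 * M < q * (J + 1)" by (simp add: algebra_simps)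
  moreover have "inj_on (\<lambda>h. 2 * h) {1..M}" by (auto simp: inj_on_def)
  ultimately have "(\<Sum>h\<in>{1..M}. \<phi> (2 * h)) \<le> (\<Sum>k\<in>{0..<q * (J + 1)}. \<phi> k)"
    by (subst sum.reindex[symmetric, unfolded comp_def])
      (auto intro!: sum_mono2 simp: \<phi>_def circle_norm_nonneg)
  also have "\<dots> = real (J + 1) * (\<Sum>k<q. \<phi> k)"
    using sum_atLeast0_lessThan_mult_periodic[where \<phi> = \<phi> and n = "J + 1", OF \<phi>_periodic]
    by (simp only: atLeast0LessThan)
  also have "\<dots> \<le> real (J + 1) * (4 * real q * sqrt (real q))"
    unfolding \<phi>_def by (intro mult_left_mono sum_inverse_circle_norm_le q coprime) auto
  also have "\<dots> \<le> 48 * real M * sqrt (real M)"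
  proof -
    have "real (J + 1) * real q = real (q * J) + real q" by (simp add: algebra_simps)
    also have "\<dots> \<le> 6 * real M"
    proof -
      have "q * J \<le> 2 * M" unfolding J_def by (rule times_div_less_eq_dividend)
      then have "real (q * J) \<le> real (2 * M)" "real q \<le> real (4 * M)"
        using qM by (simp_all only: of_nat_le_iff)
      then show ?thesis by simp
    qed
    finally have Jq: "real (J + 1) * real q \<le> 6 * real M" .
    have "sqrt (real q) \<le> 2 * sqrt (real M)"
      using qM real_sqrt_le_mono[of "real q" "4 * real M"] by (simp add: real_sqrt_mult)
    with Jq have "(real (J + 1) * real q) * sqrt (real q) \<le> (6 * real M) * (2 * sqrt (real M))"
      by (rule mult_mono) auto
    then show ?thesis by (simp add: algebra_simps)
  qed
  finally show ?thesis unfolding \<phi>_def .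
qed

section \<open>The Weyl sum on the minor arcs\<close>

lemma norm_sum_ee_near_rational_le:
  fixes a :: int
  assumes q: "q > 0" and coprime: "coprime a (int q)" and not_dvd: "\<not> q dvd k"
    and small: "\<bar>real k * \<beta>\<bar> \<le> 1 / (2 * real q)"
  shows "norm (\<Sum>b\<in>{1..K}. ee (real b * (real k * (of_int a / real q + \<beta>))))
    \<le> 2 / circle_norm (real k * of_int a / real q)"
proof -
  define x where "x = circle_norm (real k * of_int a / real q)"
  have "\<not> int q dvd int k * a"
    using not_dvd coprime by (simp add: coprime_commute coprime_dvd_mult_left_iff)
  then have x: "1 / real q \<le> x"
    using circle_norm_of_int_div_ge[OF q, of "int k * a"] unfolding x_def by simp
  have "x - \<bar>real k * \<beta>\<bar> \<le> circle_norm (real k * (of_int a / real q + \<beta>))"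
    using circle_norm_add_ge[of "real k * of_int a / real q" "real k * \<beta>"]
    unfolding x_def by (simp add: distrib_left)
  then have half: "x / 2 \<le> circle_norm (real k * (of_int a / real q + \<beta>))"
    using small x by simp
  have "0 < x" using x q by (meson divide_pos_pos of_nat_0_less_iff order_less_le_trans zero_less_one)
  then have "norm (\<Sum>b\<in>{1..K}. ee (real b * (real k * (of_int a / real q + \<beta>))))
      \<le> 1 / circle_norm (real k * (of_int a / real q + \<beta>))"
    using half by (intro norm_sum_ee_le_inverse_circle_norm) linarith
  also have "\<dots> \<le> 1 / (x / 2)"
    using half \<open>0 < x\<close> by (intro divide_left_mono) auto
  finally show ?thesis unfolding x_def by simp
qed

lemma norm_sum_ee_near_rational_dvd_le:
  fixes a :: int
  assumes dvd: "q dvd k" and small: "\<bar>real k * \<beta>\<bar> \<le> 1 / 2" and nonzero: "real k * \<beta> \<noteq> 0"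
  shows "norm (\<Sum>b\<in>{1..K}. ee (real b * (real k * (of_int a / real q + \<beta>)))) \<le> 1 / \<bar>real k * \<beta>\<bar>"
proof -
  obtain m where m: "k = q * m" using dvd by blast
  have "q > 0" using m nonzero by (cases "q = 0") auto
  then have "real k * (of_int a / real q + \<beta>) = real k * \<beta> + of_int (int m * a)"
    using m by (simp add: field_simps)
  then have "circle_norm (real k * (of_int a / real q + \<beta>)) = circle_norm (real k * \<beta>)"
    by (simp only: circle_norm_add_of_int)
  also have "\<dots> = \<bar>real k * \<beta>\<bar>" by (rule circle_norm_eq_abs[OF small])
  finally have "circle_norm (real k * (of_int a / real q + \<beta>)) = \<bar>real k * \<beta>\<bar>" .
  then show ?thesis
    using norm_sum_ee_le_inverse_circle_norm[of "real k * (of_int a / real q + \<beta>)" K] nonzero by simp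
qed

lemma sum_dvd_double_le_sum_quotient:
  fixes F :: "nat \<Rightarrow> real"
  assumes q: "q > 0" and F_nonneg: "\<And>j. 0 \<le> F j"
  shows "(\<Sum>h | h \<in> {1..M} \<and> q dvd 2 * h. F (2 * h div q)) \<le> (\<Sum>j\<in>{1..2 * M div q}. F j)"
proof -
  define H where "H = {h. h \<in> {1..M} \<and> q dvd 2 * h}"
  have quotient: "2 * h = q * (2 * h div q)" if "h \<in> H" for h
    using that unfolding H_def by simp
  have "inj_on (\<lambda>h. 2 * h div q) H"
    by (rule inj_onI) (metis quotient mult_left_cancel nat_mult_eq_cancel_disj zero_neq_numeral)
  moreover have "(\<lambda>h. 2 * h div q) ` H \<subseteq> {1..2 * M div q}"
  proof
    fix j assume "j \<in> (\<lambda>h. 2 * h div q) ` H"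
    then obtain h where h: "h \<in> H" "j = 2 * h div q" by blast
    have "2 * h = q * j" using quotient[OF h(1)] h(2) by simp
    moreover have "h \<noteq> 0" using h(1) unfolding H_def by simp
    ultimately have "j \<noteq> 0" by (cases j) auto
    moreover have "j \<le> 2 * M div q" using h unfolding H_def by (auto intro: div_le_mono)
    ultimately show "j \<in> {1..2 * M div q}" by simp
  qed
  ultimately show ?thesis
    unfolding H_def[symmetric]
    by (subst sum.reindex[symmetric, unfolded comp_def]) (auto intro!: sum_mono2 F_nonneg)
qed

lemma min_le_sqrt_mult:
  fixes x y :: real
  assumes "0 \<le> x" "0 \<le> y"
  shows "min x y \<le> sqrt (x * y)"
  using assms by (intro real_le_rsqrt) (auto simp: power2_eq_square min_def intro: mult_mono)

lemma sum_dvd_double_min_inverse_le: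
  assumes q: "q > 0" and \<beta>: "\<beta> \<noteq> 0"
  shows "(\<Sum>h | h \<in> {1..M} \<and> q dvd 2 * h. min (real M) (1 / (real (2 * h) * \<bar>\<beta>\<bar>)))
    \<le> 2 * (real M / real q) * sqrt (2 / \<bar>\<beta>\<bar>)"
proof -
  define J where "J = 2 * M div q"
  define c where "c = sqrt (real M / (real q * \<bar>\<beta>\<bar>))"
  have "min (real M) (1 / (real (2 * h) * \<bar>\<beta>\<bar>)) \<le> c / sqrt (real (2 * h div q))"
    if "q dvd 2 * h" for h
  proof -
    have "real (2 * h) = real q * real (2 * h div q)"
      using that by (simp flip: of_nat_mult)
    then have eq: "real M * (1 / (real (2 * h) * \<bar>\<beta>\<bar>))
        = real M / (real q * \<bar>\<beta>\<bar>) / real (2 * h div q)"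
      by (simp add: field_simps)
    have "min (real M) (1 / (real (2 * h) * \<bar>\<beta>\<bar>)) \<le> sqrt (real M * (1 / (real (2 * h) * \<bar>\<beta>\<bar>)))"
      by (rule min_le_sqrt_mult) auto
    also have "\<dots> = c / sqrt (real (2 * h div q))"
      unfolding eq c_def by (rule real_sqrt_divide)
    finally show ?thesis .
  qed
  then have "(\<Sum>h | h \<in> {1..M} \<and> q dvd 2 * h. min (real M) (1 / (real (2 * h) * \<bar>\<beta>\<bar>)))
      \<le> (\<Sum>h | h \<in> {1..M} \<and> q dvd 2 * h. c / sqrt (real (2 * h div q)))"
    by (intro sum_mono) simp
  also have "\<dots> \<le> (\<Sum>j\<in>{1..J}. c / sqrt (real j))"
    unfolding J_def by (rule sum_dvd_double_le_sum_quotient[OF q]) (simp add: c_def)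
  also have "\<dots> = c * (\<Sum>j\<in>{1..J}. 1 / sqrt (real j))" by (simp add: sum_distrib_left)
  also have "\<dots> \<le> c * (2 * sqrt (real J))"
    by (intro mult_left_mono sum_inverse_sqrt_le) (simp add: c_def)
  also have "\<dots> = 2 * sqrt (real M * real J / (real q * \<bar>\<beta>\<bar>))"
    unfolding c_def by (simp add: real_sqrt_mult[symmetric])
  also have "\<dots> \<le> 2 * sqrt ((real M / real q)\<^sup>2 * (2 / \<bar>\<beta>\<bar>))"
  proof -
    have "real q * real J \<le> 2 * real M"
      using times_div_less_eq_dividend[of q "2 * M"] unfolding J_def
      by (metis of_nat_le_iff of_nat_mult of_nat_numeral)
    then have "real J \<le> 2 * real M / real q" using q by (simp add: field_simps)
    then have "real M * real J / (real q * \<bar>\<beta>\<bar>) \<le> real M * (2 * real M / real q) / (real q * \<bar>\<beta>\<bar>)"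
      using q by (intro divide_right_mono mult_left_mono) auto
    then show ?thesis by (simp add: power2_eq_square field_simps)
  qed
  also have "\<dots> = 2 * (real M / real q) * sqrt (2 / \<bar>\<beta>\<bar>)"
    by (simp only: real_sqrt_mult real_sqrt_abs) simp
  finally show ?thesis .
qed

lemma card_dvd_double_le:
  assumes "q > 0"
  shows "real (card {h. h \<in> {1..M} \<and> q dvd 2 * h}) \<le> 2 * real M / real q"
proof -
  have "real (card {h. h \<in> {1..M} \<and> q dvd 2 * h}) = (\<Sum>h | h \<in> {1..M} \<and> q dvd 2 * h. (\<lambda>_. 1) (2 * h div q))"
    by simp
  also have "\<dots> \<le> (\<Sum>j\<in>{1..2 * M div q}. 1)"
    by (rule sum_dvd_double_le_sum_quotient[OF assms]) simp
  also have "\<dots> \<le> 2 * real M / real q"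
  proof -
    have "q * (2 * M div q) \<le> 2 * M" by (rule times_div_less_eq_dividend)
    then have "real q * real (2 * M div q) \<le> 2 * real M"
      by (metis of_nat_le_iff of_nat_mult of_nat_numeral)
    then show ?thesis using assms by (simp add: field_simps)
  qed
  finally show ?thesis .
qed

lemma sum_dvd_double_le:
  fixes T :: "nat \<Rightarrow> real"
  assumes q: "q > 0" and Q: "1 \<le> Q" and M: "1 \<le> M" and MN: "(real M)\<^sup>2 \<le> 2 * real N"
    and T_le: "\<And>h. T h \<le> real M"
    and T_le_inverse: "\<And>h. h \<in> {1..M} \<Longrightarrow> q dvd 2 * h \<Longrightarrow> \<beta> \<noteq> 0 \<Longrightarrow>
      T h \<le> 1 / (real (2 * h) * \<bar>\<beta>\<bar>)"
    and far: "Q < q \<or> real Q ^ 2 / real N < \<bar>\<beta>\<bar>"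
  shows "(\<Sum>h | h \<in> {1..M} \<and> q dvd 2 * h. T h) \<le> 4 * real N / real Q"
proof (cases "Q < q")
  case True
  have "(\<Sum>h | h \<in> {1..M} \<and> q dvd 2 * h. T h) \<le> real (card {h. h \<in> {1..M} \<and> q dvd 2 * h}) * real M"
    using sum_mono[of _ T "\<lambda>_. real M"] T_le by simp
  also have "\<dots> \<le> (2 * real M / real Q) * real M"
    using card_dvd_double_le[OF q, of M] True Q
    by (intro mult_right_mono order_trans[OF _ divide_left_mono[of Q q]]) auto
  also have "\<dots> \<le> 2 * (2 * real N) / real Q"
    using MN by (simp add: power2_eq_square divide_right_mono)
  finally show ?thesis by simp
next
  case False
  then have far: "real Q ^ 2 / real N < \<bar>\<beta>\<bar>" using far by simp
  moreover have "0 \<le> real Q ^ 2 / real N" by simp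
  ultimately have "0 < \<bar>\<beta>\<bar>" by linarith
  then have "\<beta> \<noteq> 0" by simp
  have "1 \<le> (real M)\<^sup>2" using M by simp
  then have N_pos: "0 < real N" using MN by linarith
  have "(\<Sum>h | h \<in> {1..M} \<and> q dvd 2 * h. T h)
      \<le> (\<Sum>h | h \<in> {1..M} \<and> q dvd 2 * h. min (real M) (1 / (real (2 * h) * \<bar>\<beta>\<bar>)))"
    using T_le T_le_inverse \<open>\<beta> \<noteq> 0\<close> by (intro sum_mono) simp
  also have "\<dots> \<le> 2 * (real M / real q) * sqrt (2 / \<bar>\<beta>\<bar>)"
    by (rule sum_dvd_double_min_inverse_le[OF q \<open>\<beta> \<noteq> 0\<close>])
  also have "\<dots> \<le> 2 * sqrt (2 * real N) * (sqrt (2 * real N) / real Q)"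
  proof (rule mult_mono)
    have "real M \<le> sqrt (2 * real N)" using MN by (rule real_le_rsqrt)
    then show "2 * (real M / real q) \<le> 2 * sqrt (2 * real N)"
      using divide_left_mono[of 1 "real q" "real M"] q by simp
    have "1 / \<bar>\<beta>\<bar> \<le> real N / (real Q)\<^sup>2"
      using far Q N_pos \<open>0 < \<bar>\<beta>\<bar>\<close> by (simp add: field_simps)
    then have "2 / \<bar>\<beta>\<bar> \<le> 2 * real N / (real Q)\<^sup>2"
      using mult_left_mono[of "1 / \<bar>\<beta>\<bar>" "real N / (real Q)\<^sup>2" 2] by simp
    then have "sqrt (2 / \<bar>\<beta>\<bar>) \<le> sqrt (2 * real N / (real Q)\<^sup>2)"
      by (rule real_sqrt_le_mono)
    then show "sqrt (2 / \<bar>\<beta>\<bar>) \<le> sqrt (2 * real N) / real Q"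
      by (simp add: real_sqrt_divide)
  qed auto
  also have "\<dots> = 4 * real N / real Q" by simp
  finally show ?thesis .
qed

lemma sum_norm_sum_ee_minor_arc_le:
  fixes M N Q :: nat and \<theta> :: real
  assumes M: "1 \<le> M" and MN: "(real M)\<^sup>2 \<le> 2 * real N" and Q: "1 \<le> Q"
    and minor: "\<And>(a::int) (q::nat). 1 \<le> q \<Longrightarrow> q \<le> Q \<Longrightarrow> real Q ^ 2 / real N < \<bar>\<theta> - of_int a / real q\<bar>"
  shows "(\<Sum>h\<in>{1..M}. norm (\<Sum>b\<in>{1..M-h}. ee (real b * (2 * real h * \<theta>))))
    \<le> 96 * real M * sqrt (real M) + 4 * real N / real Q"
proof -
  obtain a k where "coprime a k" "0 < k" "k \<le> int (4 * M)"
    and approx: "\<bar>of_int k * \<theta> - of_int a\<bar> < 1 / real (4 * M)"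
    using Dirichlet_approx_coprime[of "4 * M" \<theta>] M by auto
  define q where "q = nat k"
  define \<beta> where "\<beta> = \<theta> - of_int a / real q"
  define T where "T h = norm (\<Sum>b\<in>{1..M-h}. ee (real b * (real (2 * h) * (of_int a / real q + \<beta>))))" for h
  define H where "H = {h. h \<in> {1..M} \<and> q dvd 2 * h}"
  have q: "q > 0" "q \<le> 4 * M" "coprime a (int q)"
    using \<open>coprime a k\<close> \<open>0 < k\<close> \<open>k \<le> int (4 * M)\<close> unfolding q_def by auto
  have "real q * \<beta> = of_int k * \<theta> - of_int a"
    using q(1) \<open>0 < k\<close> unfolding \<beta>_def q_def by (simp add: field_simps)
  then have "\<bar>real q * \<beta>\<bar> < 1 / real (4 * M)" using approx by simp
  then have "\<bar>real q * \<beta>\<bar> * (2 * real M) \<le> 1 / 2" using M by (simp add: field_simps)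
  then have qM\<beta>: "2 * real M * \<bar>\<beta>\<bar> \<le> 1 / (2 * real q)" using q(1) by (simp add: abs_mult field_simps)
  have small: "\<bar>real (2 * h) * \<beta>\<bar> \<le> 1 / (2 * real q)" if "h \<in> {1..M}" for h
  proof -
    have "\<bar>real (2 * h) * \<beta>\<bar> \<le> 2 * real M * \<bar>\<beta>\<bar>" using that by (simp add: abs_mult mult_right_mono)
    with qM\<beta> show ?thesis by linarith
  qed
  have T_le: "T h \<le> real M" for h
    unfolding T_def using norm_sum_ee_le[where K = "M - h"] by (meson diff_le_self of_nat_le_iff order_trans)
  have "(\<Sum>h\<in>{1..M} - H. T h) \<le> (\<Sum>h\<in>{1..M} - H. 2 / circle_norm (real (2 * h) * of_int a / real q))"
    unfolding T_def H_def by (intro sum_mono norm_sum_ee_near_rational_le q small) auto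
  also have "\<dots> \<le> (\<Sum>h\<in>{1..M}. 2 / circle_norm (real (2 * h) * of_int a / real q))"
    by (intro sum_mono2) (auto simp: circle_norm_nonneg)
  also have "\<dots> = 2 * (\<Sum>h\<in>{1..M}. 1 / circle_norm (real (2 * h) * of_int a / real q))"
    by (simp add: sum_distrib_left)
  also have "\<dots> \<le> 2 * (48 * real M * sqrt (real M))"
    by (intro mult_left_mono sum_inverse_circle_norm_even_le q) auto
  finally have off: "(\<Sum>h\<in>{1..M} - H. T h) \<le> 96 * real M * sqrt (real M)" by simp
  \<comment> \<open>if \<open>q\<close> divides \<open>2 h\<close> then \<open>2 h a / q\<close> is an integer, and only the size of \<open>\<beta>\<close> helps\<close>
  have on: "(\<Sum>h\<in>H. T h) \<le> 4 * real N / real Q"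
    unfolding H_def
  proof (rule sum_dvd_double_le[OF q(1) Q M MN T_le])
    fix h assume h: "h \<in> {1..M}" "q dvd 2 * h" and "\<beta> \<noteq> 0"
    have "1 / (2 * real q) \<le> 1 / 2" using q(1) by simp
    then have "\<bar>real (2 * h) * \<beta>\<bar> \<le> 1 / 2" using small[OF h(1)] by linarith
    moreover have "real (2 * h) * \<beta> \<noteq> 0" using h(1) \<open>\<beta> \<noteq> 0\<close> by simp
    ultimately show "T h \<le> 1 / (real (2 * h) * \<bar>\<beta>\<bar>)"
      using norm_sum_ee_near_rational_dvd_le[OF h(2)] unfolding T_def by (simp add: abs_mult)
  next
    show "Q < q \<or> real Q ^ 2 / real N < \<bar>\<beta>\<bar>"
      using minor[of q a] q(1) unfolding \<beta>_def by linarith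
  qed
  have "(\<Sum>h\<in>{1..M}. norm (\<Sum>b\<in>{1..M-h}. ee (real b * (2 * real h * \<theta>)))) = (\<Sum>h\<in>{1..M}. T h)"
    unfolding T_def \<beta>_def by simp
  also have "\<dots> = (\<Sum>h\<in>{1..M} - H. T h) + (\<Sum>h\<in>H. T h)"
    by (rule sum.subset_diff) (auto simp: H_def)
  finally show ?thesis using off on by linarith
qed

lemma norm_weyl_sum_minor_arc_le:
  fixes M N Q :: nat and \<theta> :: real
  assumes Q: "1 \<le> Q" and MQ: "28 * Q\<^sup>2 \<le> M" and MN: "(real M)\<^sup>2 \<le> 2 * real N"
    and minor: "\<And>(a::int) (q::nat). 1 \<le> q \<Longrightarrow> q \<le> Q \<Longrightarrow> real Q ^ 2 / real N < \<bar>\<theta> - of_int a / real q\<bar>"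
  shows "norm (weyl_sum M \<theta>) \<le> 10 * sqrt (real N / real Q)"
proof -
  have "28 * (real Q)\<^sup>2 \<le> real M" using MQ by (metis of_nat_le_iff of_nat_mult of_nat_numeral of_nat_power)
  then have "sqrt (25 * (real Q)\<^sup>2) \<le> sqrt (real M)" by simp
  then have QM: "5 * real Q \<le> sqrt (real M)" by (simp add: real_sqrt_mult)
  have "1 \<le> Q\<^sup>2" using Q by simp
  then have M: "1 \<le> M" using MQ by linarith
  have "real M \<le> real M * sqrt (real M)" using M by simp
  then have "(norm (weyl_sum M \<theta>))\<^sup>2 \<le> 193 * (real M * sqrt (real M)) + 8 * real N / real Q"
    using weyl_differencing[of M \<theta>] sum_norm_sum_ee_minor_arc_le[OF M MN Q minor] by simp
  also have "193 * (real M * sqrt (real M)) \<le> 92 * real N / real Q"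
  proof -
    have "193 * (real M * sqrt (real M)) * real Q \<le> 193 * (real M * sqrt (real M)) * (sqrt (real M) / 5)"
      using QM by (intro mult_left_mono) auto
    also have "\<dots> = 193 / 5 * (real M)\<^sup>2" by (simp add: power2_eq_square)
    also have "\<dots> \<le> 92 * real N" using MN by simp
    finally show ?thesis using Q by (simp add: field_simps)
  qed
  finally have "(norm (weyl_sum M \<theta>))\<^sup>2 \<le> 100 * (real N / real Q)" by simp
  then have "norm (weyl_sum M \<theta>) \<le> sqrt 100 * sqrt (real N / real Q)"
    unfolding real_sqrt_mult[symmetric] by (rule real_le_rsqrt)
  moreover have "sqrt 100 = (10::real)" by (rule real_sqrt_unique) simp_all
  ultimately show ?thesis by simp
qed

section \<open>Major arcs\<close>

lemma card_le_interval_length: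
  fixes S :: "nat set" and x y :: real
  assumes "finite S" and "x \<le> y" and S: "\<And>r. r \<in> S \<Longrightarrow> x \<le> real r \<and> real r \<le> y"
  shows "real (card S) \<le> y - x + 1"
proof (cases "S = {}")
  case False
  then obtain r0 where "r0 \<in> S" by auto
  then have "0 \<le> y" using S by force
  define lo where "lo = nat \<lceil>x\<rceil>"
  define hi where "hi = nat \<lfloor>y\<rfloor>"
  have "S \<subseteq> {lo..hi}"
  proof
    fix r assume "r \<in> S"
    then have "x \<le> real r" "real r \<le> y" using S by auto
    then show "r \<in> {lo..hi}" unfolding lo_def hi_def by (simp add: le_nat_floor)
  qed
  then have "real (card S) \<le> real (Suc hi - lo)" using card_mono[of "{lo..hi}" S] by simp
  moreover have "real hi \<le> y" unfolding hi_def using \<open>0 \<le> y\<close> by (rule of_nat_floor)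
  moreover have "x \<le> real lo" unfolding lo_def by (rule real_nat_ceiling_ge)
  ultimately show ?thesis using assms(2) by (cases "lo \<le> Suc hi") (auto simp: of_nat_diff)
qed (use assms(2) in simp)

lemma numerator_bounds_if_close:
  fixes a :: int
  assumes "0 \<le> \<theta>" "\<theta> < 1" and q: "1 \<le> q" "q \<le> Q"
    and close: "\<bar>\<theta> - of_int a / real q\<bar> \<le> \<eta>" and \<eta>: "\<eta> < 1 / real Q"
  shows "0 \<le> a \<and> a \<le> int q"
proof -
  have "1 / real Q \<le> 1 / real q" using q by (intro divide_left_mono) auto
  then have "\<bar>\<theta> - of_int a / real q\<bar> < 1 / real q" using close \<eta> by linarith
  then have "\<theta> * real q < 1 + of_int a" "of_int a < 1 + \<theta> * real q"
    using q(1) by (auto simp: abs_less_iff field_simps)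
  moreover have "0 \<le> \<theta> * real q" "\<theta> * real q \<le> real q"
    using assms(1,2) mult_left_le_one_le[of "real q" \<theta>] by simp_all
  ultimately have "(-1::real) < of_int a" "of_int a < real q + 1" by linarith+
  then show ?thesis by linarith
qed

definition major_arc_points :: "nat \<Rightarrow> nat \<Rightarrow> real \<Rightarrow> nat set" where
  "major_arc_points L Q \<eta> =
     {r\<in>{..<L}. \<exists>(a::int) (q::nat). 1 \<le> q \<and> q \<le> Q \<and> \<bar>real r / real L - of_int a / real q\<bar> \<le> \<eta>}"

lemma card_close_points_le:
  assumes L: "L > 0" and \<eta>: "0 \<le> \<eta>"
  shows "real (card {r\<in>{..<L}. \<bar>real r / real L - c\<bar> \<le> \<eta>}) \<le> 2 * \<eta> * real L + 1"
proof -
  have "real (card {r\<in>{..<L}. \<bar>real r / real L - c\<bar> \<le> \<eta>})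
      \<le> (c * real L + \<eta> * real L) - (c * real L - \<eta> * real L) + 1"
  proof (rule card_le_interval_length)
    fix r assume "r \<in> {r\<in>{..<L}. \<bar>real r / real L - c\<bar> \<le> \<eta>}"
    then have "real L * \<bar>real r / real L - c\<bar> \<le> real L * \<eta>" by (intro mult_left_mono) auto
    moreover have "real L * \<bar>real r / real L - c\<bar> = \<bar>real r - c * real L\<bar>"
      using L by (simp add: abs_mult[symmetric] field_simps)
    ultimately show "c * real L - \<eta> * real L \<le> real r \<and> real r \<le> c * real L + \<eta> * real L"
      by (simp add: abs_le_iff mult.commute)
  qed (use \<eta> in simp_all)
  then show ?thesis by simp
qed

lemma card_major_arc_points_le:
  assumes L: "L > 0" and \<eta>: "0 \<le> \<eta>" "\<eta> < 1 / real Q"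
  shows "real (card (major_arc_points L Q \<eta>)) \<le> real Q * (real Q + 1) * (2 * \<eta> * real L + 1)"
proof -
  define A where "A q a = {r\<in>{..<L}. \<bar>real r / real L - of_int a / real q\<bar> \<le> \<eta>}" for q :: nat and a :: int
  have "major_arc_points L Q \<eta> \<subseteq> (\<Union>q\<in>{1..Q}. \<Union>a\<in>{0..int q}. A q a)"
  proof
    fix r assume "r \<in> major_arc_points L Q \<eta>"
    then obtain a q where r: "r < L" "1 \<le> q" "q \<le> Q" "\<bar>real r / real L - of_int a / real q\<bar> \<le> \<eta>"
      unfolding major_arc_points_def by auto
    then have "a \<in> {0..int q}"
      using numerator_bounds_if_close[of "real r / real L" q Q a \<eta>] \<eta>(2) L by auto
    moreover have "r \<in> A q a" using r unfolding A_def by simp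
    moreover have "q \<in> {1..Q}" using r by simp
    ultimately show "r \<in> (\<Union>q\<in>{1..Q}. \<Union>a\<in>{0..int q}. A q a)" by blast
  qed
  then have "card (major_arc_points L Q \<eta>) \<le> card (\<Union>q\<in>{1..Q}. \<Union>a\<in>{0..int q}. A q a)"
    by (rule card_mono[rotated]) (simp add: A_def)
  also have "\<dots> \<le> (\<Sum>q\<in>{1..Q}. \<Sum>a\<in>{0..int q}. card (A q a))"
    by (intro order_trans[OF card_UN_le] sum_mono card_UN_le) simp_all
  finally have "real (card (major_arc_points L Q \<eta>)) \<le> (\<Sum>q\<in>{1..Q}. \<Sum>a\<in>{0..int q}. real (card (A q a)))"
    by (simp flip: of_nat_sum)
  also have "\<dots> \<le> (\<Sum>q\<in>{1..Q}. \<Sum>a\<in>{0..int q}. 2 * \<eta> * real L + 1)"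
    unfolding A_def by (intro sum_mono card_close_points_le L \<eta>(1))
  also have "\<dots> \<le> (\<Sum>q\<in>{1..Q}. (real Q + 1) * (2 * \<eta> * real L + 1))"
    using \<eta> by (intro sum_mono) (simp add: mult_right_mono)
  also have "\<dots> = real Q * (real Q + 1) * (2 * \<eta> * real L + 1)" by simp
  finally show ?thesis .
qed

lemma norm_fhat_major_arc_le:
  assumes hyp: "\<And>(a::int) (q::int) \<beta>. 1 \<le> a \<Longrightarrow> a \<le> int Q \<Longrightarrow> 1 \<le> q \<Longrightarrow> q \<le> int Q \<Longrightarrow>
      norm (fhat N f (of_int a / of_int q + \<beta>)) \<le> \<delta> * \<bar>\<beta>\<bar> * (real N)\<^sup>2"
    and "0 \<le> \<delta>" and "1 \<le> Q" and "\<eta> < 1 / real Q" and r: "r \<in> major_arc_points L Q \<eta>"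
  shows "norm (fhat N f (real r / real L)) \<le> \<delta> * \<eta> * (real N)\<^sup>2"
proof -
  obtain a q where aq: "r < L" "1 \<le> q" "q \<le> Q" and close: "\<bar>real r / real L - of_int a / real q\<bar> \<le> \<eta>"
    using r unfolding major_arc_points_def by auto
  have "0 \<le> a" "a \<le> int q"
    using numerator_bounds_if_close[OF _ _ aq(2,3) close assms(4)] aq(1) by auto
  have "norm (fhat N f (real r / real L)) \<le> \<delta> * \<bar>real r / real L - of_int a / real q\<bar> * (real N)\<^sup>2"
  proof (cases "a = 0")
    case True
    \<comment> \<open>\<open>a = 0\<close> is not covered by the hypothesis; by periodicity use \<open>a / q = 1 / 1\<close> instead\<close>
    have "fhat N f (real r / real L) = fhat N f (of_int 1 / of_int 1 + real r / real L)"
      using fhat_add_of_int[of N f "real r / real L" 1] by (simp add: add.commute)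
    also have "norm \<dots> \<le> \<delta> * \<bar>real r / real L\<bar> * (real N)\<^sup>2" by (rule hyp) (use assms(3) in auto)
    finally show ?thesis using True by simp
  next
    case False
    have "real r / real L = of_int a / of_int (int q) + (real r / real L - of_int a / real q)" by simp
    then have "norm (fhat N f (real r / real L))
        = norm (fhat N f (of_int a / of_int (int q) + (real r / real L - of_int a / real q)))"
      by (simp only: flip:)
    also have "\<dots> \<le> \<delta> * \<bar>real r / real L - of_int a / real q\<bar> * (real N)\<^sup>2"
      by (rule hyp) (use False \<open>0 \<le> a\<close> \<open>a \<le> int q\<close> aq in auto)
    finally show ?thesis .
  qed
  also have "\<dots> \<le> \<delta> * \<eta> * (real N)\<^sup>2"
    using close assms(2) by (intro mult_right_mono mult_left_mono) auto
  finally show ?thesis .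
qed

lemma sum_minor_arcs_le:
  assumes "N \<le> L" and bounded: "\<forall>n\<in>{1..N}. f n \<in> {-1..1} \<and> g n \<in> {-1..1}"
    and "S \<subseteq> {..<L}" and "0 \<le> B" and W: "\<And>r. r \<in> S \<Longrightarrow> norm (weyl_sum M (real r / real L)) \<le> B"
  shows "(\<Sum>r\<in>S. norm (fhat N f (real r / real L)) * norm (fhat N g (real r / real L))
      * norm (weyl_sum M (real r / real L))) \<le> B * (real L * real N)"
proof -
  have "(\<Sum>r\<in>S. norm (fhat N f (real r / real L)) * norm (fhat N g (real r / real L))
      * norm (weyl_sum M (real r / real L)))
      \<le> (\<Sum>r\<in>S. norm (fhat N f (real r / real L)) * norm (fhat N g (real r / real L)) * B)"
    by (intro sum_mono mult_left_mono W) auto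
  also have "\<dots> \<le> (\<Sum>r<L. norm (fhat N f (real r / real L)) * norm (fhat N g (real r / real L)) * B)"
    using assms(3,4) by (intro sum_mono2) auto
  also have "\<dots> = B * (\<Sum>r<L. norm (fhat N f (real r / real L)) * norm (fhat N g (real r / real L)))"
    by (simp add: sum_distrib_left mult_ac)
  also have "\<dots> \<le> B * (real L * real N)"
    using sum_norm_fhat_mult_le[OF assms(1) bounded] assms(4) by (rule mult_left_mono)
  finally show ?thesis .
qed

lemma sum_major_arcs_le:
  assumes "N \<le> L" and bounded: "\<forall>n\<in>{1..N}. g n \<in> {-1..1}" and "S \<subseteq> {..<L}"
    and "0 \<le> F" and f: "\<And>r. r \<in> S \<Longrightarrow> norm (fhat N f (real r / real L)) \<le> F"
  shows "(\<Sum>r\<in>S. norm (fhat N f (real r / real L)) * norm (fhat N g (real r / real L))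
      * norm (weyl_sum M (real r / real L))) \<le> F * real M * sqrt (real (card S) * (real L * real N))"
proof -
  have "(\<Sum>r\<in>S. norm (fhat N f (real r / real L)) * norm (fhat N g (real r / real L))
      * norm (weyl_sum M (real r / real L)))
      \<le> (\<Sum>r\<in>S. F * norm (fhat N g (real r / real L)) * real M)"
    using assms(4) by (intro sum_mono mult_mono f norm_weyl_sum_le) auto
  also have "\<dots> = F * real M * (\<Sum>r\<in>S. norm (fhat N g (real r / real L)))"
    by (simp add: sum_distrib_left mult_ac)
  also have "\<dots> \<le> F * real M * sqrt (real (card S) * (real L * real N))"
    using assms(4) by (intro mult_left_mono sum_norm_fhat_le_sqrt_card assms(1-3)) auto
  finally show ?thesis .
qed

lemma floor_sqrt_double_ge:
  assumes "400 * Q ^ 4 \<le> N"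
  shows "28 * Q\<^sup>2 \<le> floor_sqrt (2 * N)"
proof (rule le_floor_sqrtI)
  have "(28 * Q\<^sup>2)\<^sup>2 = 784 * Q ^ 4" by (simp add: power_mult_distrib power2_eq_square power4_eq_xxxx)
  then show "(28 * Q\<^sup>2)\<^sup>2 \<le> 2 * N" using assms by linarith
qed

lemma floor_sqrt_double_le: "real (floor_sqrt (2 * N)) \<le> 3 / 2 * sqrt (real N)"
proof -
  have "(real (floor_sqrt (2 * N)))\<^sup>2 \<le> 2 * real N"
    by (metis floor_sqrt_power2_le of_nat_le_iff of_nat_mult of_nat_numeral of_nat_power)
  then have "(real (floor_sqrt (2 * N)))\<^sup>2 \<le> 9 / 4 * real N" by linarith
  then have "real (floor_sqrt (2 * N)) \<le> sqrt (9 / 4 * real N)" by (rule real_le_rsqrt)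
  also have "\<dots> = 3 / 2 * sqrt (real N)" by (simp add: real_sqrt_mult real_sqrt_divide)
  finally show ?thesis .
qed

lemma major_arc_width_lt_inverse:
  assumes Q: "1 \<le> Q" and N: "400 * Q ^ 4 \<le> N"
  shows "real Q ^ 2 / real N < 1 / real Q"
proof -
  have Q4: "1 \<le> Q ^ 4" "Q ^ 3 \<le> Q ^ 4" using Q by (simp_all add: power_increasing)
  then have "Q ^ 3 < N" using N by linarith
  then have "real Q ^ 3 < real N" by (metis of_nat_less_iff of_nat_power)
  then have "real Q ^ 2 * real Q < real N" by (simp add: power3_eq_cube power2_eq_square)
  moreover have "0 < real N" using Q4 N by simp
  ultimately show ?thesis using Q by (simp add: field_simps)
qed

lemma norm_weyl_sum_off_major_arcs_le:
  assumes Q: "1 \<le> Q" and N: "400 * Q ^ 4 \<le> N"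
    and r: "r \<notin> major_arc_points L Q (real Q ^ 2 / real N)" "r < L"
  shows "norm (weyl_sum (floor_sqrt (2 * N)) (real r / real L)) \<le> 10 * sqrt (real N / real Q)"
proof (rule norm_weyl_sum_minor_arc_le[OF Q floor_sqrt_double_ge[OF N]])
  show "(real (floor_sqrt (2 * N)))\<^sup>2 \<le> 2 * real N"
    by (metis floor_sqrt_power2_le of_nat_le_iff of_nat_mult of_nat_numeral of_nat_power)
  fix a :: int and q :: nat
  assume "1 \<le> q" "q \<le> Q"
  then have "\<not> \<bar>real r / real L - of_int a / real q\<bar> \<le> real Q ^ 2 / real N"
    using r unfolding major_arc_points_def by auto
  then show "real Q ^ 2 / real N < \<bar>real r / real L - of_int a / real q\<bar>" by simp
qed

lemma circle_method_estimate:
  fixes Q N :: nat and \<delta> :: real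
  assumes Q: "1 \<le> Q" and \<delta>: "0 \<le> \<delta>" and N: "400 * Q ^ 4 \<le> N"
    and bounded: "\<forall>n\<in>{1..N}. f n \<in> {-1..1} \<and> g n \<in> {-1..1}"
    and hyp: "\<And>(a::int) (q::int) \<beta>. 1 \<le> a \<Longrightarrow> a \<le> int Q \<Longrightarrow> 1 \<le> q \<Longrightarrow> q \<le> int Q \<Longrightarrow>
       norm (fhat N f (of_int a / of_int q + \<beta>)) \<le> \<delta> * \<bar>\<beta>\<bar> * (real N)\<^sup>2"
    and L: "L = 4 * N" and M: "M = floor_sqrt (2 * N)" and \<eta>: "\<eta> = real Q ^ 2 / real N"
  shows "real L * \<bar>infsum (\<lambda>n. conv N f g n * indicator Sq n) {(1::int)..}\<bar>
     \<le> 10 * sqrt (real N / real Q) * (real L * real N)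
       + \<delta> * \<eta> * (real N)\<^sup>2 * real M * sqrt (real (card (major_arc_points L Q \<eta>)) * (real L * real N))"
proof -
  define Maj where "Maj = major_arc_points L Q \<eta>"
  define X where "X r = norm (fhat N f (real r / real L)) * norm (fhat N g (real r / real L))
    * norm (weyl_sum M (real r / real L))" for r
  have Q4: "1 \<le> Q ^ 4" using Q by simp
  then have N_pos: "0 < N" using N by linarith
  have M_sq: "M\<^sup>2 \<le> 2 * N" "2 * N < (Suc M)\<^sup>2"
    unfolding M by (simp_all add: Suc_floor_sqrt_power2_gt)
  have "\<eta> < 1 / real Q" unfolding \<eta> by (rule major_arc_width_lt_inverse[OF Q N])
  have "(\<Sum>r<L. fhat N f (real r / real L) * fhat N g (real r / real L) * weyl_sum M (real r / real L))
      = of_nat L * of_real (infsum (\<lambda>n. conv N f g n * indicator Sq n) {(1::int)..})"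
    unfolding infsum_conv_squares[OF M_sq] by (rule circle_method_identity) (use N_pos M_sq L in auto)
  then have "real L * \<bar>infsum (\<lambda>n. conv N f g n * indicator Sq n) {(1::int)..}\<bar>
      = norm (\<Sum>r<L. fhat N f (real r / real L) * fhat N g (real r / real L) * weyl_sum M (real r / real L))"
    by (simp add: norm_mult)
  also have "\<dots> \<le> (\<Sum>r<L. X r)"
    unfolding X_def by (rule order_trans[OF norm_sum]) (simp add: norm_mult)
  also have "\<dots> = (\<Sum>r\<in>{..<L} - Maj. X r) + (\<Sum>r\<in>Maj. X r)"
    by (rule sum.subset_diff) (auto simp: Maj_def major_arc_points_def)
  finally have split: "real L * \<bar>infsum (\<lambda>n. conv N f g n * indicator Sq n) {(1::int)..}\<bar>
      \<le> (\<Sum>r\<in>{..<L} - Maj. X r) + (\<Sum>r\<in>Maj. X r)" .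
  have "(\<Sum>r\<in>{..<L} - Maj. X r) \<le> 10 * sqrt (real N / real Q) * (real L * real N)"
    unfolding X_def
  proof (rule sum_minor_arcs_le[OF _ bounded])
    show "norm (weyl_sum M (real r / real L)) \<le> 10 * sqrt (real N / real Q)" if "r \<in> {..<L} - Maj" for r
      using that norm_weyl_sum_off_major_arcs_le[OF Q N, of r L] unfolding Maj_def M \<eta> by simp
  qed (auto simp: L)
  moreover have "(\<Sum>r\<in>Maj. X r) \<le> \<delta> * \<eta> * (real N)\<^sup>2 * real M * sqrt (real (card Maj) * (real L * real N))"
    unfolding X_def using bounded \<delta> \<eta>
    by (intro sum_major_arcs_le norm_fhat_major_arc_le[OF hyp \<delta> Q \<open>\<eta> < 1 / real Q\<close>])
      (auto simp: L Maj_def major_arc_points_def)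
  ultimately show ?thesis using split unfolding Maj_def by linarith
qed

lemma mult_sqrt_eq_powr:
  fixes x :: real
  assumes "0 \<le> x"
  shows "x * sqrt x = x powr (3/2)"
proof (cases "x = 0")
  case False
  have "x powr (3/2) = x powr (1 + 1/2)" by simp
  also have "\<dots> = x * sqrt x" unfolding powr_add using assms False by (simp add: powr_half_sqrt)
  finally show ?thesis by simp
qed simp

lemma sqrt_card_major_arc_points_le:
  assumes Q: "1 \<le> Q" and N: "400 * Q ^ 4 \<le> N"
  shows "sqrt (real (card (major_arc_points (4 * N) Q (real Q ^ 2 / real N))) * (real (4 * N) * real N))
    \<le> 9 * real Q ^ 2 * real N"
proof -
  define C where "C = real (card (major_arc_points (4 * N) Q (real Q ^ 2 / real N)))"
  have "1 \<le> Q ^ 4" using Q by simp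
  then have N_pos: "0 < real N" using N by simp
  have "C \<le> real Q * (real Q + 1) * (8 * real Q ^ 2 + 1)"
    using card_major_arc_points_le[of "4 * N" "real Q ^ 2 / real N" Q] major_arc_width_lt_inverse[OF Q N] N_pos
    unfolding C_def by simp
  also have "\<dots> \<le> real Q * (2 * real Q) * (9 * real Q ^ 2)"
    using Q by (intro mult_mono) auto
  also have "\<dots> = 18 * real Q ^ 4" by (simp add: power4_eq_xxxx power2_eq_square)
  finally have "C * (real (4 * N) * real N) \<le> 18 * real Q ^ 4 * (real (4 * N) * real N)"
    by (intro mult_right_mono) auto
  also have "\<dots> = 72 * (real Q ^ 2 * real N)\<^sup>2" by (simp add: power2_eq_square power4_eq_xxxx)
  also have "\<dots> \<le> (9 * real Q ^ 2 * real N)\<^sup>2" by (simp add: power_mult_distrib)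
  finally show ?thesis unfolding C_def using real_le_lsqrt by simp
qed

lemma abs_sum_conv_squares_le:
  fixes Q N :: nat and \<delta> :: real
  assumes Q: "1 \<le> Q" and \<delta>: "0 \<le> \<delta>" and N: "400 * Q ^ 4 \<le> N"
    and bounded: "\<forall>n\<in>{1..N}. f n \<in> {-1..1} \<and> g n \<in> {-1..1}"
    and hyp: "\<And>(a::int) (q::int) \<beta>. 1 \<le> a \<Longrightarrow> a \<le> int Q \<Longrightarrow> 1 \<le> q \<Longrightarrow> q \<le> int Q \<Longrightarrow>
       norm (fhat N f (of_int a / of_int q + \<beta>)) \<le> \<delta> * \<bar>\<beta>\<bar> * (real N)\<^sup>2"
  shows "\<bar>infsum (\<lambda>n. conv N f g n * indicator Sq n) {(1::int)..}\<bar>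
     \<le> 10 * (\<delta> * real Q ^ 4 + 1 / sqrt (real Q)) * real N powr (3/2)"
proof -
  define L where "L = 4 * N"
  define M where "M = floor_sqrt (2 * N)"
  define \<eta> where "\<eta> = real Q ^ 2 / real N"
  have "1 \<le> Q ^ 4" using Q by simp
  then have N_pos: "0 < real N" using N by simp
  have "\<delta> * \<eta> * (real N)\<^sup>2 * real M * sqrt (real (card (major_arc_points L Q \<eta>)) * (real L * real N))
      \<le> \<delta> * \<eta> * (real N)\<^sup>2 * (3 / 2 * sqrt (real N)) * (9 * real Q ^ 2 * real N)"
    unfolding M_def L_def \<eta>_def using \<delta> floor_sqrt_double_le sqrt_card_major_arc_points_le[OF Q N]
    by (intro mult_mono) auto
  also have "\<dots> \<le> real L * (4 * \<delta> * real Q ^ 4 * (real N * sqrt (real N)))"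
    unfolding \<eta>_def L_def using \<delta> N_pos by (simp add: power2_eq_square power4_eq_xxxx)
  finally have "real L * \<bar>infsum (\<lambda>n. conv N f g n * indicator Sq n) {(1::int)..}\<bar>
      \<le> real L * ((4 * \<delta> * real Q ^ 4 + 10 / sqrt (real Q)) * (real N * sqrt (real N)))"
    using circle_method_estimate[OF Q \<delta> N bounded hyp L_def M_def \<eta>_def]
    by (simp add: real_sqrt_divide field_simps)
  then have "\<bar>infsum (\<lambda>n. conv N f g n * indicator Sq n) {(1::int)..}\<bar>
      \<le> (4 * \<delta> * real Q ^ 4 + 10 / sqrt (real Q)) * (real N * sqrt (real N))"
    by (rule mult_left_le_imp_le) (use N_pos in \<open>simp add: L_def\<close>)
  also have "\<dots> \<le> 10 * (\<delta> * real Q ^ 4 + 1 / sqrt (real Q)) * (real N * sqrt (real N))"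
    using \<delta> by (intro mult_right_mono) auto
  finally show ?thesis by (simp add: mult_sqrt_eq_powr)
qed

theorem proposition4p4:
  fixes lam :: real
  assumes "lam > 0" and "\<exists>k::int. 1 / lam^2 = of_int k"
  shows "\<exists>N0::nat. \<forall>\<delta>::real. \<forall>N::nat. \<forall>f g :: nat \<Rightarrow> real.
     \<delta> > 0 \<longrightarrow> N \<ge> N0 \<longrightarrow>
     (\<forall>n\<in>{1..N}. f n \<in> {-1..1} \<and> g n \<in> {-1..1}) \<longrightarrow>
     (\<forall>a q :: int. \<forall>\<beta>::real. 1 \<le> a \<and> real_of_int a \<le> 1 / lam^2 \<and> 1 \<le> q \<and> real_of_int q \<le> 1 / lam^2 \<longrightarrow>
         norm (fhat N f (real_of_int a / real_of_int q + \<beta>)) \<le> \<delta> * \<bar>\<beta>\<bar> * (real N)^2) \<longrightarrow>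
     \<bar>infsum (\<lambda>n. conv N f g n * indicator Sq n) {(1::int)..}\<bar>
        \<le> 10 * (\<delta> * (1 / lam^8) + lam) * (real N) powr (3/2)"
proof -
  obtain k :: int where k: "1 / lam^2 = of_int k" using assms(2) by blast
  define Q where "Q = nat k"
  have "0 < real_of_int k" using k assms(1) by (metis zero_less_divide_1_iff zero_less_power)
  then have Q: "real Q = 1 / lam^2" "1 \<le> Q" using k unfolding Q_def by simp_all
  have lam: "real Q ^ 4 = 1 / lam ^ 8" "1 / sqrt (real Q) = lam"
    using assms(1) by (simp_all add: Q(1) real_sqrt_divide power_divide flip: power_mult)
  show ?thesis
  proof (intro exI[of _ "400 * Q ^ 4"] allI impI)
    fix \<delta> :: real and N :: nat and f g :: "nat \<Rightarrow> real"
    assume \<delta>: "\<delta> > 0" and N: "400 * Q ^ 4 \<le> N"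
      and bounded: "\<forall>n\<in>{1..N}. f n \<in> {-1..1} \<and> g n \<in> {-1..1}"
      and hyp: "\<forall>a q :: int. \<forall>\<beta>::real. 1 \<le> a \<and> real_of_int a \<le> 1 / lam^2 \<and> 1 \<le> q \<and> real_of_int q \<le> 1 / lam^2 \<longrightarrow>
         norm (fhat N f (real_of_int a / real_of_int q + \<beta>)) \<le> \<delta> * \<bar>\<beta>\<bar> * (real N)^2"
    have "\<bar>infsum (\<lambda>n. conv N f g n * indicator Sq n) {(1::int)..}\<bar>
        \<le> 10 * (\<delta> * real Q ^ 4 + 1 / sqrt (real Q)) * real N powr (3/2)"
    proof (rule abs_sum_conv_squares_le[OF Q(2) _ N bounded])
      show "norm (fhat N f (of_int a / of_int q + \<beta>)) \<le> \<delta> * \<bar>\<beta>\<bar> * (real N)\<^sup>2"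
        if "1 \<le> a" "a \<le> int Q" "1 \<le> q" "q \<le> int Q" for a q :: int and \<beta> :: real
        using that hyp Q(1) by (metis of_int_le_iff of_int_of_nat_eq)
    qed (use \<delta> in simp)
    then show "\<bar>infsum (\<lambda>n. conv N f g n * indicator Sq n) {(1::int)..}\<bar>
        \<le> 10 * (\<delta> * (1 / lam^8) + lam) * (real N) powr (3/2)"
      by (simp only: lam)
  qed
qed

end
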